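(* Let $n \geq 1$, let $Q, R$ be fixed real symmetric positive semidefinite $n \times n$ matrices and $S = \begin{pmatrix} Q & 0 \\ 0 & R \end{pmatrix}$, with eigenvalues $s_1 \geq \dots \geq s_r > 0 = s_{r+1} = \dots = s_{2n}$. Let $U, V$ be independent Haar-distributed random $n\times n$ orthogonal matrices with $j$-th columns $u_j, v_j$. Let $N_1,\dots,N_n, M_1, \dots, M_n$ be i.i.d. $\chi^2_n$ random variables independent of $(U,V)$, set $a_j = \begin{pmatrix} \sqrt{N_j}\, u_j \\ \sqrt{M_j}\, v_j \end{pmatrix}$ and $\zeta_j = a_j^\top S a_j$. For any nonempty $\mathcal{S} \subset \{1,\dots,r\}$, let $r_{\mathcal{S}} = |\mathcal{S}|$ and $G_{\mathcal{S}} = \left[\prod_{l \in \mathcal{S}} s_l\right]^{1/r_{\mathcal{S}}}$. Then $$\mathbb{E}\min_{j \leq n} \zeta_j \geq \frac{1}{e}\, r_{\mathcal{S}}\, n^{-\frac{2}{r_{\mathcal{S}}}}\, G_{\mathcal{S}}.$$ *)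

theory Defs
  imports "HOL-Probability.Probability" "HOL-Computational_Algebra.Polynomial"
begin

definition psd_matrix :: "real^'n^'n \<Rightarrow> bool" where
  "psd_matrix A \<longleftrightarrow> transpose A = A \<and> (\<forall>x. 0 \<le> x \<bullet> (A *v x))"

definition charpoly :: "real^'n^'n \<Rightarrow> real poly" where
  "charpoly A = det (\<chi> i j. if i = j then [:- (A$i$j), 1:] else [:- (A$i$j):])"

definition eigen_mset :: "real^'n^'n \<Rightarrow> real multiset" where
  "eigen_mset A = proots (charpoly A)"

(* eigenvalues in non-increasing order, 1-indexed: s 1 \<ge> s 2 \<ge> ... *)
definition eig_desc :: "real^'n^'n \<Rightarrow> nat \<Rightarrow> real" where
  "eig_desc A l = rev (sorted_list_of_multiset (eigen_mset A)) ! (l - 1)"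

definition block_diag :: "real^'n^'n \<Rightarrow> real^'n^'n \<Rightarrow> real^('n + 'n)^('n + 'n)" where
  "block_diag Q R = (\<chi> i j. case (i, j) of
      (Inl a, Inl b) \<Rightarrow> Q$a$b
    | (Inr a, Inr b) \<Rightarrow> R$a$b
    | _ \<Rightarrow> 0)"

definition vstack :: "real^'n \<Rightarrow> real^'n \<Rightarrow> real^('n + 'n)" where
  "vstack x y = (\<chi> i. case i of Inl a \<Rightarrow> x$a | Inr a \<Rightarrow> y$a)"

(* Haar (uniform) probability measure on the orthogonal group O(n):
   a Borel probability measure on n x n matrices concentrated on O(n) and
   invariant under left multiplication by orthogonal matrices (this
   characterizes the Haar measure uniquely). *)
definition haar_orthogonal :: "(real^'n^'n) measure \<Rightarrow> bool" where
  "haar_orthogonal H \<longleftrightarrow> prob_space H \<and> sets H = sets borel \<and>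
     emeasure H {A. orthogonal_matrix A} = 1 \<and>
     (\<forall>P. orthogonal_matrix P \<longrightarrow> distr H borel (\<lambda>A. P ** A) = H)"

definition chi2_density :: "nat \<Rightarrow> real \<Rightarrow> real" where
  "chi2_density k x = (if x > 0 then
      x powr (real k / 2 - 1) * exp (- x / 2) / (2 powr (real k / 2) * Gamma (real k / 2))
    else 0)"

definition chi2 :: "nat \<Rightarrow> real measure" where
  "chi2 k = density lborel (\<lambda>x. ennreal (chi2_density k x))"

end

theory Submission
  imports Defs "HOL-Analysis.Change_Of_Vars" "HOL-Library.Numeral_Type"
begin

(* For \<lambda> > 0, a variable N ~ \<chi>\<^sup>2\<^sub>n has E exp(-\<lambda> c N) = (1 + 2 \<lambda> c) powr (-n/2), which is also
   E exp(-\<lambda> c |g|\<^sup>2) for a standard Gaussian vector g in R^n.  As Haar measure and the Gaussian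
   measure are rotation invariant, sqrt N u\<^sub>j may therefore be replaced by g inside the Laplace
   transform, and diagonalizing Q and R gives E exp(-\<lambda> \<zeta>\<^sub>j) = \<Prod>\<^sub>k (1 + 2 \<lambda> s\<^sub>k) powr (-1/2).
   Since exp(-\<lambda> min\<^sub>j \<zeta>\<^sub>j) \<le> \<Sum>\<^sub>j exp(-\<lambda> \<zeta>\<^sub>j) and \<Prod>\<^sub>k (1 + 2 \<lambda> s\<^sub>k) \<ge> (2 \<lambda>)^r \<Prod>\<^bsub>l\<in>S\<^esub> s\<^sub>l with r = |S|,
   Jensen's inequality for x \<mapsto> exp(-\<lambda> x) bounds E min\<^sub>j \<zeta>\<^sub>j from below, and the optimal
   \<lambda> = e n^(2/r) / (2 G\<^sub>S) turns this bound into e\<^sup>-\<^sup>1 r n^(-2/r) G\<^sub>S. *)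

section \<open>Orthogonal diagonalization of symmetric matrices\<close>

definition diag_mat :: "('n::finite \<Rightarrow> real) \<Rightarrow> real^'n^'n" where
  "diag_mat d = (\<chi> i j. if i = j then d i else 0)"

lemma diag_mat_mult_vec_nth: "(diag_mat d *v x) $ i = d i * x $ i"
proof -
  have "(diag_mat d *v x) $ i = (\<Sum>j\<in>UNIV. (if i = j then d i else 0) * x $ j)"
    by (simp add: diag_mat_def matrix_vector_mult_def)
  also have "\<dots> = (\<Sum>j\<in>UNIV. if i = j then d i * x $ j else 0)" by (rule sum.cong) auto
  finally show ?thesis by simp
qed

lemma inner_sym_matrix_mult:
  fixes A :: "real^'n^'n"
  assumes "transpose A = A"
  shows "x \<bullet> (A *v y) = (A *v x) \<bullet> y"
proof -
  have "x \<bullet> (A *v y) = (x v* A) \<bullet> y" by (simp add: dot_lmul_matrix)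
  also have "x v* A = transpose A *v x" by (simp add: transpose_matrix_vector)
  finally show ?thesis using assms by simp
qed

lemma rayleigh_maximizer_residual_orthogonal:
  fixes A :: "real^'n^'n"
  assumes sym: "transpose A = A" and W: "subspace W" and v: "v \<in> W" "v \<bullet> v = 1"
    and max: "\<And>x. x \<in> W \<Longrightarrow> x \<bullet> (A *v x) \<le> (v \<bullet> (A *v v)) * (x \<bullet> x)" and w: "w \<in> W"
  shows "w \<bullet> (A *v v - (v \<bullet> (A *v v)) *\<^sub>R v) = 0"
proof -
  define \<mu> where "\<mu> = v \<bullet> (A *v v)"
  note max = max[folded \<mu>_def]
  define c where "c = w \<bullet> (A *v v - \<mu> *\<^sub>R v)"
  define d where "d = w \<bullet> (A *v w) - \<mu> * (w \<bullet> w)"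
  have d: "d \<le> 0" using max[OF w] d_def by simp
  have variation: "2 * t * c + t^2 * d \<le> 0" for t
  proof -
    have "v + t *\<^sub>R w \<in> W" using W v w by (simp add: subspace_add subspace_scale)
    then have le: "(v + t *\<^sub>R w) \<bullet> (A *v (v + t *\<^sub>R w)) \<le> \<mu> * ((v + t *\<^sub>R w) \<bullet> (v + t *\<^sub>R w))"
      by (rule max)
    have "v \<bullet> (A *v w) = w \<bullet> (A *v v)"
      using inner_sym_matrix_mult[OF sym, of v w] by (simp add: inner_commute)
    then have "(v + t *\<^sub>R w) \<bullet> (A *v (v + t *\<^sub>R w)) = \<mu> + 2 * t * (w \<bullet> (A *v v)) + t^2 * (w \<bullet> (A *v w))"
      by (simp add: \<mu>_def matrix_vector_right_distrib matrix_vector_mult_scaleR inner_add_left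
          inner_add_right power2_eq_square algebra_simps)
    moreover have "(v + t *\<^sub>R w) \<bullet> (v + t *\<^sub>R w) = 1 + 2 * t * (w \<bullet> v) + t^2 * (w \<bullet> w)"
      using v(2) by (simp only: inner_add_left inner_add_right inner_scaleR_left inner_scaleR_right
          inner_commute[of v w]) (simp add: algebra_simps power2_eq_square)
    moreover have "2 * t * c + t^2 * d
        = (\<mu> + 2 * t * (w \<bullet> (A *v v)) + t^2 * (w \<bullet> (A *v w))) - \<mu> * (1 + 2 * t * (w \<bullet> v) + t^2 * (w \<bullet> w))"
      by (simp add: c_def d_def inner_diff_right algebra_simps)
    ultimately show ?thesis using le by simp
  qed
  \<comment> \<open>a small step \<open>t = s c\<close> would increase the quotient unless \<open>c = 0\<close>\<close>
  define s where "s = 1 / (1 + \<bar>d\<bar>)"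
  have s: "s > 0" "s * \<bar>d\<bar> \<le> 1" by (auto simp: s_def field_simps)
  have "c^2 * (s * (2 + s * d)) \<le> 0"
    using variation[of "s * c"] by (simp add: power2_eq_square algebra_simps)
  moreover have "s * (2 + s * d) > 0"
  proof -
    have "s * d = - (s * \<bar>d\<bar>)" using d by simp
    then show ?thesis using s by (intro mult_pos_pos) linarith+
  qed
  ultimately have "c^2 \<le> 0" using mult_le_cancel_right_pos[of "s * (2 + s * d)" "c^2" 0] by simp
  then show ?thesis by (simp add: c_def \<mu>_def power2_less_eq_zero_iff)
qed

lemma sym_matrix_eigenvector_in_invariant_subspace:
  fixes A :: "real^'n^'n"
  assumes sym: "transpose A = A" and W: "subspace W" "W \<noteq> {0}"
    and inv: "\<And>x. x \<in> W \<Longrightarrow> A *v x \<in> W"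
  obtains v \<mu> where "v \<in> W" "norm v = 1" "A *v v = \<mu> *\<^sub>R v"
proof -
  let ?K = "W \<inter> sphere 0 1"
  let ?f = "\<lambda>x. x \<bullet> (A *v x)"
  have compact: "compact ?K"
    using W(1) by (simp add: closed_subspace closed_Int_compact)
  have nonempty: "?K \<noteq> {}"
  proof -
    obtain y where "y \<in> W" "y \<noteq> 0" using W subspace_0 by blast
    then have "y /\<^sub>R norm y \<in> ?K" using W(1) by (simp add: subspace_scale)
    then show ?thesis by blast
  qed
  have "continuous_on UNIV ?f"
    by (intro continuous_intros linear_continuous_on matrix_vector_mul_bounded_linear)
  then have cont: "continuous_on ?K ?f" by (rule continuous_on_subset) simp
  obtain v where v: "v \<in> ?K" and vmax: "\<forall>y\<in>?K. ?f y \<le> ?f v"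
    using continuous_attains_sup[OF compact nonempty cont] by blast
  have vW: "v \<in> W" and vv: "v \<bullet> v = 1" using v by (auto simp: norm_eq_1)
  have rayleigh: "?f x \<le> ?f v * (x \<bullet> x)" if "x \<in> W" for x
  proof (cases "x = 0")
    case False
    then have "x /\<^sub>R norm x \<in> ?K" using that W(1) by (simp add: subspace_scale)
    then have "?f (x /\<^sub>R norm x) \<le> ?f v" using vmax by blast
    moreover have "?f (x /\<^sub>R norm x) = ?f x / (norm x)^2"
      by (simp add: matrix_vector_mult_scaleR power2_eq_square divide_inverse)
    ultimately show ?thesis
      using False by (simp add: divide_le_eq mult.commute power2_norm_eq_inner)
  qed simp
  have "A *v v - ?f v *\<^sub>R v \<in> W" using inv[OF vW] vW W(1) by (simp add: subspace_diff subspace_scale)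
  from rayleigh_maximizer_residual_orthogonal[OF sym W(1) vW vv rayleigh this]
  have "A *v v = ?f v *\<^sub>R v" by simp
  then show ?thesis using that vW v by auto
qed

lemma sym_matrix_orthonormal_eigenvectors_span_invariant_subspace:
  fixes A :: "real^'n^'n"
  assumes sym: "transpose A = A"
  shows "subspace W \<Longrightarrow> (\<And>x. x \<in> W \<Longrightarrow> A *v x \<in> W) \<Longrightarrow>
    \<exists>B. B \<subseteq> W \<and> pairwise orthogonal B \<and> (\<forall>b\<in>B. norm b = 1 \<and> (\<exists>\<mu>. A *v b = \<mu> *\<^sub>R b)) \<and> W \<subseteq> span B"
proof (induction "dim W" arbitrary: W rule: less_induct)
  case less
  show ?case
  proof (cases "W = {0}")
    case True
    then show ?thesis by (intro exI[of _ "{}"]) auto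
  next
    case False
    obtain v \<mu> where v: "v \<in> W" "norm v = 1" "A *v v = \<mu> *\<^sub>R v"
      using sym_matrix_eigenvector_in_invariant_subspace[OF sym less.prems(1) False less.prems(2)] .
    define W' where "W' = W \<inter> {x. v \<bullet> x = 0}"
    have sW': "subspace W'" unfolding W'_def
      using less.prems(1) by (simp add: subspace_inter subspace_hyperplane)
    have invW': "A *v x \<in> W'" if "x \<in> W'" for x
    proof -
      have "v \<bullet> (A *v x) = \<mu> * (v \<bullet> x)" using v(3) by (simp add: inner_sym_matrix_mult[OF sym])
      then show ?thesis using that less.prems(2) by (auto simp: W'_def)
    qed
    have "W' \<subseteq> W" "v \<notin> W'" using v(2) by (auto simp: W'_def norm_eq_1)
    then have "span W' \<subset> span W" using v(1) less.prems(1) sW'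
      by (metis span_eq_iff psubsetI)
    then have "dim W' < dim W" by (rule dim_psubset)
    from less.hyps[OF this sW' invW'] obtain B' where B': "B' \<subseteq> W'" "pairwise orthogonal B'"
      "\<forall>b\<in>B'. norm b = 1 \<and> (\<exists>\<mu>. A *v b = \<mu> *\<^sub>R b)" "W' \<subseteq> span B'" by blast
    show ?thesis
    proof (intro exI[of _ "insert v B'"] conjI)
      show "insert v B' \<subseteq> W" using B'(1) v(1) by (auto simp: W'_def)
      show "pairwise orthogonal (insert v B')"
        using B'(1,2) unfolding pairwise_insert by (auto simp: W'_def orthogonal_def inner_commute)
      show "\<forall>b\<in>insert v B'. norm b = 1 \<and> (\<exists>\<mu>. A *v b = \<mu> *\<^sub>R b)" using B'(3) v by auto
      show "W \<subseteq> span (insert v B')"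
      proof
        fix x assume x: "x \<in> W"
        have "x - (v \<bullet> x) *\<^sub>R v \<in> W'"
          using x v less.prems(1) by (auto simp: W'_def subspace_diff subspace_scale inner_diff_right norm_eq_1)
        then have "x - (v \<bullet> x) *\<^sub>R v \<in> span (insert v B')"
          using B'(4) span_mono[of B' "insert v B'"] by auto
        moreover have "(v \<bullet> x) *\<^sub>R v \<in> span (insert v B')" by (simp add: span_base span_scale)
        ultimately have "(x - (v \<bullet> x) *\<^sub>R v) + (v \<bullet> x) *\<^sub>R v \<in> span (insert v B')"
          by (rule span_add)
        then show "x \<in> span (insert v B')" by simp
      qed
    qed
  qed
qed

lemma sym_matrix_orthogonal_diagonalization:
  fixes A :: "real^'n^'n"
  assumes sym: "transpose A = A"
  obtains P d where "orthogonal_matrix P" "A = P ** diag_mat d ** transpose P"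
proof -
  obtain B where B: "pairwise orthogonal B" "\<forall>b\<in>B. norm b = 1 \<and> (\<exists>\<mu>. A *v b = \<mu> *\<^sub>R b)"
    "UNIV \<subseteq> span B"
    using sym_matrix_orthonormal_eigenvectors_span_invariant_subspace[OF sym, of UNIV] by auto
  have "0 \<notin> B" using B(2) by auto
  then have indB: "independent B" using B(1) pairwise_orthogonal_independent by blast
  then have "card B = dim (UNIV :: (real^'n) set)"
    using basis_card_eq_dim[of B UNIV] B(3) by auto
  then have "card B = CARD('n)" by (simp add: dim_UNIV)
  then obtain \<beta> where \<beta>: "bij_betw \<beta> (UNIV :: 'n set) B"
    using finite_same_card_bij[OF finite independent_imp_finite[OF indB]] by metis
  have \<beta>B: "\<beta> i \<in> B" for i using \<beta> by (auto simp: bij_betw_def)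
  define d where "d i = (SOME \<mu>. A *v \<beta> i = \<mu> *\<^sub>R \<beta> i)" for i
  have d: "A *v \<beta> i = d i *\<^sub>R \<beta> i" for i
    unfolding d_def using B(2) \<beta>B[of i] by (metis (mono_tags, lifting) someI_ex)
  have orthonormal: "(\<Sum>k\<in>UNIV. \<beta> i $ k * \<beta> j $ k) = (if i = j then 1 else 0)" for i j
  proof (cases "i = j")
    case True then show ?thesis using B(2) \<beta>B[of i] by (simp add: norm_eq_1 inner_vec_def)
  next
    case False
    then have "\<beta> i \<noteq> \<beta> j" using \<beta> by (auto simp: bij_betw_def inj_on_def)
    then show ?thesis
      using B(1) \<beta>B[of i] \<beta>B[of j] False by (auto simp: pairwise_def orthogonal_def inner_vec_def)
  qed
  define P :: "real^'n^'n" where "P = (\<chi> r c. \<beta> c $ r)"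
  have "transpose P ** P = mat 1"
    unfolding P_def matrix_matrix_mult_def transpose_def mat_def vec_eq_iff
    by (simp add: orthonormal)
  then have oP: "orthogonal_matrix P" by (simp add: orthogonal_matrix)
  have "(A ** P) $ r $ c = (P ** diag_mat d) $ r $ c" for r c
  proof -
    have "(A ** P) $ r $ c = (A *v \<beta> c) $ r"
      by (simp add: P_def matrix_matrix_mult_def matrix_vector_mult_def)
    also have "\<dots> = (P ** diag_mat d) $ r $ c"
      by (simp add: d P_def matrix_matrix_mult_def diag_mat_def if_distrib cong: if_cong)
    finally show ?thesis .
  qed
  then have "A ** P = P ** diag_mat d" by (simp add: vec_eq_iff)
  then have "A ** P ** transpose P = P ** diag_mat d ** transpose P" by simp
  then have "A = P ** diag_mat d ** transpose P"
    using oP by (simp add: orthogonal_matrix_def matrix_mul_assoc[symmetric])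
  with oP show ?thesis by (rule that)
qed

lemma quadratic_form_orthogonal_diagonalization:
  fixes Q :: "real^'n^'n"
  assumes "Q = P ** diag_mat d ** transpose P"
  shows "x \<bullet> (Q *v x) = (\<Sum>i\<in>UNIV. d i * ((transpose P *v x) $ i)^2)"
proof -
  define y where "y = transpose P *v x"
  have "x \<bullet> (Q *v x) = (x v* P) \<bullet> (diag_mat d *v y)"
    by (simp only: assms y_def matrix_vector_mul_assoc matrix_mul_assoc dot_lmul_matrix)
  also have "x v* P = y" by (simp add: y_def)
  finally show ?thesis
    by (simp add: y_def inner_vec_def diag_mat_mult_vec_nth power2_eq_square mult_ac)
qed

section \<open>Eigenvalues of the block diagonal matrix\<close>

lemma sum_UNIV_sum_type: "(\<Sum>k\<in>UNIV. f k) = (\<Sum>i\<in>UNIV. f (Inl i)) + (\<Sum>i\<in>UNIV. f (Inr i))"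
  for f :: "'a::finite + 'b::finite \<Rightarrow> 'c::comm_monoid_add"
proof -
  have "(\<Sum>k\<in>UNIV. f k) = sum f (range Inl) + sum f (range Inr)"
    by (subst UNIV_sum, rule sum.union_disjoint) auto
  then show ?thesis by (simp add: sum.reindex)
qed

lemma prod_UNIV_sum_type: "(\<Prod>k\<in>UNIV. f k) = (\<Prod>i\<in>UNIV. f (Inl i)) * (\<Prod>i\<in>UNIV. f (Inr i))"
  for f :: "'a::finite + 'b::finite \<Rightarrow> 'c::comm_monoid_mult"
proof -
  have "(\<Prod>k\<in>UNIV. f k) = prod f (range Inl) * prod f (range Inr)"
    by (subst UNIV_sum, rule prod.union_disjoint) auto
  then show ?thesis by (simp add: prod.reindex)
qed

lemma poly_det: "poly (det M) x = det (\<chi> i j. poly (M $ i $ j) x)"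
  by (simp add: det_def poly_sum poly_prod)

lemma poly_charpoly: "poly (charpoly A) x = det (mat x - A)"
proof -
  have "(\<chi> i j. poly ((\<chi> i j. if i = j then [:- (A$i$j), 1:] else [:- (A$i$j):]) $ i $ j) x) = mat x - A"
    by (simp add: vec_eq_iff mat_def)
  then show ?thesis unfolding charpoly_def poly_det by simp
qed

lemma charpoly_orthogonal_diagonalization:
  fixes A :: "real^'n^'n"
  assumes oP: "orthogonal_matrix P" and A: "A = P ** diag_mat d ** transpose P"
  shows "charpoly A = (\<Prod>i\<in>UNIV. [:- d i, 1:])"
proof -
  have entry: "(P ** diag_mat c ** transpose P) $ i $ j = (\<Sum>k\<in>UNIV. P $ i $ k * c k * P $ j $ k)" for c i j
    by (simp add: matrix_matrix_mult_def diag_mat_def transpose_def if_distrib sum.distrib cong: if_cong)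
  have PPt: "(\<Sum>k\<in>UNIV. P $ i $ k * P $ j $ k) = (if i = j then 1 else 0)" for i j
  proof -
    have "(P ** transpose P) $ i $ j = (mat 1 :: real^'n^'n) $ i $ j"
      using oP by (simp add: orthogonal_matrix_def)
    then show ?thesis by (simp add: matrix_matrix_mult_def transpose_def mat_def)
  qed
  have shift: "mat x - A = P ** diag_mat (\<lambda>i. x - d i) ** transpose P" for x
  proof -
    have "(P ** diag_mat (\<lambda>i. x - d i) ** transpose P) $ i $ j
        = x * (\<Sum>k\<in>UNIV. P $ i $ k * P $ j $ k) - (\<Sum>k\<in>UNIV. P $ i $ k * d k * P $ j $ k)" for i j
      unfolding entry by (simp add: sum_distrib_left sum_subtractf[symmetric] algebra_simps)
    then show ?thesis by (simp add: vec_eq_iff PPt A entry mat_def)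
  qed
  have "det P * det P = 1"
    using oP det_mul[of P "transpose P"] by (simp add: orthogonal_matrix_def)
  moreover have "det (diag_mat (\<lambda>i. x - d i)) = (\<Prod>i\<in>UNIV. x - d i)" for x
    by (subst det_diagonal) (auto simp: diag_mat_def)
  ultimately have "poly (charpoly A) x = poly (\<Prod>i\<in>UNIV. [:- d i, 1:]) x" for x
    by (simp add: poly_charpoly shift det_mul poly_prod algebra_simps)
  then show ?thesis using poly_eq_poly_eq_iff by blast
qed

lemma eigen_mset_orthogonal_diagonalization:
  fixes A :: "real^'n^'n"
  assumes "orthogonal_matrix P" and "A = P ** diag_mat d ** transpose P"
  shows "eigen_mset A = image_mset d (mset_set UNIV)"
proof -
  have singletons: "(\<Sum>i\<in>I. {# d i #}) = image_mset d (mset_set I)" if "finite I" for I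
    using that by (induction I rule: finite_induct) auto
  have "eigen_mset A = (\<Sum>i\<in>UNIV. proots [:- d i, 1:])"
    unfolding eigen_mset_def charpoly_orthogonal_diagonalization[OF assms] by (rule proots_prod) auto
  also have "\<dots> = (\<Sum>i\<in>UNIV. {# d i #})" by simp
  finally show ?thesis using singletons[of UNIV] by simp
qed

lemma psd_orthogonal_diagonalization_nonneg:
  fixes A :: "real^'n^'n"
  assumes psd: "psd_matrix A" and oP: "orthogonal_matrix P" and A: "A = P ** diag_mat d ** transpose P"
  shows "d i \<ge> 0"
proof -
  define e :: "real^'n" where "e = axis i 1"
  have "transpose P *v (P *v e) = e"
    using oP by (simp add: orthogonal_matrix_def matrix_vector_mul_assoc)
  then have "(P *v e) \<bullet> (A *v (P *v e)) = (\<Sum>k\<in>UNIV. d k * (e $ k)^2)"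
    by (simp add: quadratic_form_orthogonal_diagonalization[OF A])
  also have "\<dots> = (\<Sum>k\<in>UNIV. if k = i then d i else 0)"
    by (intro sum.cong) (auto simp: e_def axis_def)
  also have "\<dots> = d i" by simp
  finally show ?thesis using psd by (metis psd_matrix_def)
qed

lemma block_diag_mult: "block_diag A B ** block_diag C D = block_diag (A ** C) (B ** D)"
  by (simp add: vec_eq_iff block_diag_def matrix_matrix_mult_def sum_UNIV_sum_type split: sum.splits)

lemma transpose_block_diag: "transpose (block_diag A B) = block_diag (transpose A) (transpose B)"
  by (simp add: vec_eq_iff block_diag_def transpose_def split: sum.splits)

lemma block_diag_mat_1: "block_diag (mat 1) (mat 1) = mat 1"
  by (simp add: vec_eq_iff block_diag_def mat_def split: sum.splits)

lemma block_diag_diag_mat: "block_diag (diag_mat d1) (diag_mat d2) = diag_mat (case_sum d1 d2)"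
  by (simp add: vec_eq_iff block_diag_def diag_mat_def split: sum.splits)

lemma orthogonal_matrix_block_diag:
  "orthogonal_matrix P1 \<Longrightarrow> orthogonal_matrix P2 \<Longrightarrow> orthogonal_matrix (block_diag P1 P2)"
  by (simp add: orthogonal_matrix transpose_block_diag block_diag_mult block_diag_mat_1)

lemma block_diag_psd_diagonalization:
  fixes Q R :: "real^'n^'n"
  assumes "psd_matrix Q" "psd_matrix R"
  obtains P1 d1 P2 d2 where "orthogonal_matrix P1" "Q = P1 ** diag_mat d1 ** transpose P1" "\<And>i. d1 i \<ge> 0"
    "orthogonal_matrix P2" "R = P2 ** diag_mat d2 ** transpose P2" "\<And>i. d2 i \<ge> 0"
    "eigen_mset (block_diag Q R) = image_mset (case_sum d1 d2) (mset_set UNIV)"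
proof -
  obtain P1 d1 where 1: "orthogonal_matrix P1" "Q = P1 ** diag_mat d1 ** transpose P1"
    using sym_matrix_orthogonal_diagonalization[of Q] assms(1) unfolding psd_matrix_def by blast
  obtain P2 d2 where 2: "orthogonal_matrix P2" "R = P2 ** diag_mat d2 ** transpose P2"
    using sym_matrix_orthogonal_diagonalization[of R] assms(2) unfolding psd_matrix_def by blast
  have "block_diag Q R = block_diag P1 P2 ** diag_mat (case_sum d1 d2) ** transpose (block_diag P1 P2)"
    by (simp add: 1(2) 2(2) transpose_block_diag block_diag_mult block_diag_diag_mat[symmetric])
  then have "eigen_mset (block_diag Q R) = image_mset (case_sum d1 d2) (mset_set UNIV)"
    by (rule eigen_mset_orthogonal_diagonalization[OF orthogonal_matrix_block_diag[OF 1(1) 2(1)]])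
  then show ?thesis
    using that 1 2 psd_orthogonal_diagonalization_nonneg[OF assms(1) 1]
      psd_orthogonal_diagonalization_nonneg[OF assms(2) 2] by blast
qed

lemma eig_desc_in_eigen_mset:
  assumes "1 \<le> l" "l \<le> size (eigen_mset A)"
  shows "eig_desc A l \<in># eigen_mset A"
proof -
  have "length (rev (sorted_list_of_multiset (eigen_mset A))) = size (eigen_mset A)"
    by (metis length_rev mset_sorted_list_of_multiset size_mset)
  then show ?thesis
    using assms nth_mem[of "l - 1" "rev (sorted_list_of_multiset (eigen_mset A))"]
    by (simp add: eig_desc_def)
qed

lemma prod_nth_le_prod_list:
  fixes f g :: "real \<Rightarrow> real"
  assumes S: "S \<subseteq> {1..length xs}"
    and fg: "\<And>y. y \<in> set xs \<Longrightarrow> 0 \<le> g y \<and> g y \<le> f y \<and> 1 \<le> f y"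
  shows "(\<Prod>l\<in>S. g (xs ! (l - 1))) \<le> prod_list (map f xs)"
proof -
  define S' where "S' = (\<lambda>l. l - 1) ` S"
  have inj: "inj_on (\<lambda>l. l - 1) S"
  proof (rule inj_onI)
    fix x y assume "x \<in> S" "y \<in> S" "x - 1 = y - 1"
    moreover have "x \<ge> 1" "y \<ge> 1" using S \<open>x \<in> S\<close> \<open>y \<in> S\<close> by auto
    ultimately show "x = y" by simp
  qed
  have S': "S' \<subseteq> {..<length xs}" using S by (auto simp: S'_def subset_iff)
  have f1: "1 \<le> f (xs ! i)" if "i < length xs" for i using fg[OF nth_mem[OF that]] by simp
  have "(\<Prod>l\<in>S. g (xs ! (l - 1))) = (\<Prod>i\<in>S'. g (xs ! i))"
    using prod.reindex[OF inj, of "\<lambda>i. g (xs ! i)"] by (simp add: S'_def comp_def)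
  also have "\<dots> \<le> (\<Prod>i\<in>S'. f (xs ! i))"
    using S' fg by (intro prod_mono) (auto intro!: nth_mem)
  also have "\<dots> \<le> (\<Prod>i<length xs. f (xs ! i))"
    using S' f1 by (intro prod_mono2) (auto simp: subset_iff intro: order_trans[OF zero_le_one])
  also have "\<dots> = prod_list (map f xs)"
    by (induction xs) (simp_all add: prod.lessThan_Suc_shift del: prod.lessThan_Suc)
  finally show ?thesis .
qed

lemma prod_eig_desc_le:
  fixes A :: "real^'m^'m" and d :: "'m \<Rightarrow> real"
  assumes E: "eigen_mset A = image_mset d (mset_set UNIV)" and d: "\<And>k. d k \<ge> 0"
    and c: "c \<ge> 0" and S: "S \<subseteq> {1..CARD('m)}"
  shows "(\<Prod>l\<in>S. c * eig_desc A l) \<le> (\<Prod>k\<in>UNIV. 1 + c * d k)"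
proof -
  define xs where "xs = rev (sorted_list_of_multiset (eigen_mset A))"
  have mset_xs: "mset xs = image_mset d (mset_set UNIV)" by (simp add: xs_def E)
  have "length xs = size (mset xs)" by simp
  then have "length xs = CARD('m)" by (simp add: mset_xs)
  then have "(\<Prod>l\<in>S. c * eig_desc A l) \<le> prod_list (map (\<lambda>y. 1 + c * y) xs)"
    unfolding eig_desc_def xs_def[symmetric]
    using S c d mset_xs by (intro prod_nth_le_prod_list) (auto simp flip: set_mset_mset)
  also have "\<dots> = prod_mset (image_mset (\<lambda>y. 1 + c * y) (mset xs))"
    by (metis mset_map prod_mset_prod_list)
  also have "\<dots> = (\<Prod>k\<in>UNIV. 1 + c * d k)"
    by (simp add: mset_xs prod_unfold_prod_mset image_mset.compositionality comp_def)
  finally show ?thesis .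
qed

lemma eig_desc_nonneg:
  fixes A :: "real^'m^'m" and d :: "'m \<Rightarrow> real"
  assumes E: "eigen_mset A = image_mset d (mset_set UNIV)" and d: "\<And>k. d k \<ge> 0"
    and l: "1 \<le> l" "l \<le> CARD('m)"
  shows "eig_desc A l \<ge> 0"
proof -
  have "size (eigen_mset A) = CARD('m)" by (simp add: E)
  then have "eig_desc A l \<in># eigen_mset A" using l by (intro eig_desc_in_eigen_mset) auto
  then show ?thesis using d by (auto simp: E)
qed

section \<open>The standard Gaussian measure on \<open>\<real>\<^sup>n\<close>\<close>

definition gaussian_density :: "real^'m::finite \<Rightarrow> real" where
  "gaussian_density z = (\<Prod>k\<in>UNIV. std_normal_density (z $ k))"

definition gaussian :: "(real^'m::finite) measure" where
  "gaussian = density lborel (\<lambda>z. ennreal (gaussian_density z))"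

lemma continuous_on_vec_nth: "continuous_on UNIV (\<lambda>z::real^'m. z $ k)"
  by (intro linear_continuous_on bounded_linear_vec_nth bounded_linear_ident)

lemma borel_measurable_vec_nth[measurable]: "(\<lambda>z::real^'m. z $ k) \<in> borel_measurable borel"
  by (rule borel_measurable_continuous_onI[OF continuous_on_vec_nth])

lemma borel_measurable_gaussian_density[measurable]: "gaussian_density \<in> borel_measurable borel"
  unfolding gaussian_density_def by measurable

lemma sets_gaussian: "sets gaussian = sets borel"
  by (simp add: gaussian_def)

lemma norm_vec_power2: "(norm (z::real^'m))^2 = (\<Sum>k\<in>UNIV. (z $ k)^2)"
  by (simp add: norm_vec_def L2_set_def sum_nonneg)

lemma gaussian_density_eq:
  fixes z :: "real^'m"
  shows "gaussian_density z = (1 / sqrt (2 * pi)) ^ CARD('m) * exp (- (norm z ^ 2) / 2)"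
proof -
  have "gaussian_density z = (\<Prod>k\<in>UNIV. (1 / sqrt (2 * pi)) * exp (- ((z $ k)^2) / 2))"
    by (simp add: gaussian_density_def normal_density_def)
  also have "\<dots> = (\<Prod>k::'m\<in>UNIV. 1 / sqrt (2 * pi)) * (\<Prod>k\<in>UNIV. exp (- ((z $ k)^2) / 2))"
    by (rule prod.distrib)
  also have "\<dots> = (1 / sqrt (2 * pi)) ^ CARD('m) * exp (\<Sum>k\<in>UNIV. - ((z $ k)^2) / 2)"
    by (simp add: exp_sum)
  also have "(\<Sum>k\<in>UNIV. - ((z $ k)^2) / 2) = - (norm z ^ 2) / 2"
    by (simp add: norm_vec_power2 sum_negf sum_divide_distrib)
  finally show ?thesis .
qed

lemma nn_integral_std_normal_exp_quadratic:
  assumes a: "a \<ge> 0"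
  shows "(\<integral>\<^sup>+t. ennreal (std_normal_density t * exp (- a * t^2)) \<partial>lborel) = ennreal ((1 + 2 * a) powr (-1/2))"
proof -
  define \<sigma> where "\<sigma> = 1 / sqrt (1 + 2 * a)"
  have \<sigma>: "\<sigma> > 0" using a by (simp add: \<sigma>_def)
  \<comment> \<open>the integrand is a rescaled centred normal density of variance \<open>\<sigma>\<^sup>2\<close>\<close>
  have "std_normal_density t * exp (- a * t^2) = normal_density 0 \<sigma> t * \<sigma>" for t
  proof -
    define E where "E = exp (- ((1 + 2 * a) * t^2) / 2)"
    have "exp (- (t^2) / 2) * exp (- a * t^2) = E"
      by (simp add: E_def exp_add[symmetric] field_simps)
    then have std: "std_normal_density t * exp (- a * t^2) = 1 / sqrt (2 * pi) * E"
      by (simp add: normal_density_def)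
    have \<sigma>2: "\<sigma>^2 = 1 / (1 + 2 * a)" using a by (simp add: \<sigma>_def power_divide)
    have "normal_density 0 \<sigma> t = sqrt (1 + 2 * a) / sqrt (2 * pi) * E"
      using a by (simp add: E_def normal_density_def \<sigma>2 real_sqrt_divide real_sqrt_mult field_simps)
    then have "normal_density 0 \<sigma> t * \<sigma> = (sqrt (1 + 2 * a) * \<sigma>) * (1 / sqrt (2 * pi) * E)"
      by simp
    also have "sqrt (1 + 2 * a) * \<sigma> = 1" using a by (simp add: \<sigma>_def)
    finally show ?thesis using std by simp
  qed
  then have "(\<integral>\<^sup>+t. ennreal (std_normal_density t * exp (- a * t^2)) \<partial>lborel)
      = (\<integral>\<^sup>+t. ennreal (normal_density 0 \<sigma> t) * ennreal \<sigma> \<partial>lborel)"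
    using \<sigma> by (simp add: ennreal_mult)
  also have "\<dots> = (\<integral>\<^sup>+t. ennreal (normal_density 0 \<sigma> t) \<partial>lborel) * ennreal \<sigma>"
    by (rule nn_integral_multc) measurable
  also have "(\<integral>\<^sup>+t. ennreal (normal_density 0 \<sigma> t) \<partial>lborel) = 1"
    using nn_integral_eq_integral[of lborel "normal_density 0 \<sigma>"] integral_normal_density[of 0 \<sigma>]
      integrable_normal_density[of 0 \<sigma>] \<sigma> by simp
  also have "\<sigma> = (1 + 2 * a) powr (-1/2)"
    using a by (simp add: \<sigma>_def powr_minus_divide powr_half_sqrt)
  finally show ?thesis by simp
qed

lemma nn_integral_gaussian_prod:
  fixes h :: "'m::finite \<Rightarrow> real \<Rightarrow> real"
  assumes [measurable]: "\<And>k. h k \<in> borel_measurable borel" and h: "\<And>k t. h k t \<ge> 0"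
  shows "(\<integral>\<^sup>+z. ennreal (\<Prod>k\<in>UNIV. h k (z $ k)) \<partial>(gaussian :: (real^'m) measure))
       = (\<Prod>k\<in>UNIV. \<integral>\<^sup>+t. ennreal (std_normal_density t * h k t) \<partial>lborel)"
proof -
  define F where "F k t = std_normal_density t * h k t" for k t
  have F[measurable]: "F k \<in> borel_measurable borel" for k unfolding F_def by measurable
  have F_nonneg: "F k t \<ge> 0" for k t unfolding F_def using h by simp
  have Basis: "(Basis :: (real^'m) set) = range (\<lambda>k. axis k 1)"
    by (auto simp: Basis_vec_def)
  have inj: "inj (\<lambda>k::'m. axis k (1::real))" by (auto simp: inj_def axis_eq_axis)
  define index where "index = inv (\<lambda>k::'m. axis k (1::real))"
  have index: "index (axis k 1) = k" for k unfolding index_def by (rule inv_f_f[OF inj])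
  have "(\<integral>\<^sup>+z. ennreal (\<Prod>k\<in>UNIV. h k (z $ k)) \<partial>(gaussian :: (real^'m) measure))
      = (\<integral>\<^sup>+z. ennreal (gaussian_density z) * ennreal (\<Prod>k\<in>UNIV. h k (z $ k)) \<partial>lborel)"
    unfolding gaussian_def by (rule nn_integral_density) measurable
  also have "\<dots> = (\<integral>\<^sup>+z. (\<Prod>b\<in>Basis. ennreal (F (index b) (z \<bullet> b))) \<partial>lborel)"
    by (intro nn_integral_cong)
       (simp add: gaussian_density_def F_def prod.distrib ennreal_mult'[symmetric] prod_nonneg h
         Basis prod.reindex[OF inj] index inner_axis prod_ennreal F_nonneg)
  also have "\<dots> = (\<Prod>b\<in>Basis. (\<integral>\<^sup>+x. F (index b) x \<partial>lborel))"
    by (rule nn_integral_lborel_prod) (auto simp: F_nonneg)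
  also have "\<dots> = (\<Prod>k\<in>UNIV. (\<integral>\<^sup>+x. F k x \<partial>lborel))"
    by (simp add: Basis prod.reindex[OF inj] index)
  finally show ?thesis by (simp add: F_def)
qed

lemma nn_integral_gaussian_exp_quadratic:
  fixes a :: "'m::finite \<Rightarrow> real"
  assumes a: "\<And>k. a k \<ge> 0"
  shows "(\<integral>\<^sup>+z. ennreal (exp (- (\<Sum>k\<in>UNIV. a k * (z $ k)^2))) \<partial>(gaussian :: (real^'m) measure))
       = ennreal (\<Prod>k\<in>UNIV. (1 + 2 * a k) powr (-1/2))"
proof -
  have "(\<integral>\<^sup>+z. ennreal (exp (- (\<Sum>k\<in>UNIV. a k * (z $ k)^2))) \<partial>(gaussian :: (real^'m) measure))
      = (\<integral>\<^sup>+z. ennreal (\<Prod>k\<in>UNIV. exp (- a k * (z $ k)^2)) \<partial>(gaussian :: (real^'m) measure))"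
    by (simp add: exp_sum[symmetric] sum_negf)
  also have "\<dots> = (\<Prod>k\<in>UNIV. \<integral>\<^sup>+t. ennreal (std_normal_density t * exp (- a k * t^2)) \<partial>lborel)"
    by (rule nn_integral_gaussian_prod) auto
  also have "\<dots> = (\<Prod>k\<in>UNIV. ennreal ((1 + 2 * a k) powr (-1/2)))"
    using nn_integral_std_normal_exp_quadratic[OF a] by presburger
  finally show ?thesis by (simp add: prod_ennreal)
qed

lemma prob_space_gaussian: "prob_space (gaussian :: (real^'m::finite) measure)"
proof (rule prob_spaceI)
  show "emeasure gaussian (space (gaussian :: (real^'m) measure)) = 1"
    using nn_integral_gaussian_exp_quadratic[of "\<lambda>_. 0"] by simp
qed

lemma distr_lborel_orthogonal_transformation:
  fixes T :: "real^'m::{finite,wellorder} \<Rightarrow> real^'m::_"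
  assumes T: "orthogonal_transformation T"
  shows "distr lborel borel T = lborel"
proof -
  have lin: "linear T" using T by (rule orthogonal_transformation_linear)
  have T_meas[measurable]: "T \<in> borel_measurable borel"
    by (intro borel_measurable_continuous_onI linear_continuous_on)
       (use lin in \<open>simp add: linear_conv_bounded_linear\<close>)
  have inv: "orthogonal_transformation (inv T)" by (rule orthogonal_transformation_inv[OF T])
  have "lborel = distr lborel borel T"
  proof (rule lborel_eqI)
    fix l u :: "(real, 'm) vec" assume le: "\<And>b. b \<in> Basis \<Longrightarrow> l \<bullet> b \<le> u \<bullet> b"
    let ?B = "box l u"
    have pre: "T -` ?B = inv T ` ?B"
      using orthogonal_transformation_bij[OF T] by (rule bij_vimage_eq_inv_image)
    have "bounded_linear (inv T)"
      using orthogonal_transformation_linear[OF inv] linear_conv_bounded_linear by blast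
    then have "bounded (T -` ?B)" unfolding pre by (rule bounded_linear_image[OF bounded_box])
    have "T -` ?B \<in> sets borel" by (rule measurable_sets_borel[OF T_meas]) simp
    have "emeasure (distr lborel borel T) ?B = emeasure lborel (T -` ?B)"
      by (simp add: emeasure_distr)
    also have "\<dots> = ennreal (measure lborel (T -` ?B))"
      using emeasure_bounded_finite[OF \<open>bounded (T -` ?B)\<close>] by (simp add: emeasure_eq_ennreal_measure)
    also have "measure lborel (T -` ?B) = measure lebesgue (T -` ?B)"
      using \<open>T -` ?B \<in> sets borel\<close> by simp
    also have "measure lebesgue (T -` ?B) = measure lebesgue ?B"
      unfolding pre by (rule measure_orthogonal_image[OF inv lmeasurable_box])
    also have "measure lebesgue ?B = measure lborel ?B" by simp
    also have "ennreal (measure lborel ?B) = emeasure lborel ?B"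
      using emeasure_lborel_box_finite[of l u] by (simp add: emeasure_eq_ennreal_measure)
    also have "\<dots> = (\<Prod>b\<in>Basis. (u - l) \<bullet> b)"
      using le by (simp add: emeasure_lborel_box_eq)
    finally show "emeasure (distr lborel borel T) ?B = (\<Prod>b\<in>Basis. (u - l) \<bullet> b)" .
  qed simp
  then show ?thesis by simp
qed

lemma nn_integral_gaussian_orthogonal_transformation:
  fixes T :: "real^'m::{finite,wellorder} \<Rightarrow> real^'m::_" and g :: "real^'m::_ \<Rightarrow> ennreal"
  assumes T: "orthogonal_transformation T" and [measurable]: "g \<in> borel_measurable borel"
  shows "(\<integral>\<^sup>+z. g (T z) \<partial>gaussian) = (\<integral>\<^sup>+z. g z \<partial>gaussian)"
proof -
  have [measurable]: "T \<in> borel_measurable borel"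
    by (intro borel_measurable_continuous_onI linear_continuous_on)
       (use orthogonal_transformation_linear[OF T] in \<open>simp add: linear_conv_bounded_linear\<close>)
  have density: "gaussian_density (T z) = gaussian_density z" for z
    by (simp add: gaussian_density_eq orthogonal_transformation_norm[OF T])
  have "(\<integral>\<^sup>+z. g (T z) \<partial>gaussian) = (\<integral>\<^sup>+z. ennreal (gaussian_density (T z)) * g (T z) \<partial>lborel)"
    unfolding gaussian_def by (subst nn_integral_density) (simp_all add: density)
  also have "\<dots> = (\<integral>\<^sup>+y. ennreal (gaussian_density y) * g y \<partial>(distr lborel borel T))"
    by (rule nn_integral_distr[symmetric]) measurable
  also have "\<dots> = (\<integral>\<^sup>+z. g z \<partial>gaussian)"
    unfolding gaussian_def distr_lborel_orthogonal_transformation[OF T]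
    by (rule nn_integral_density[symmetric]) measurable
  finally show ?thesis .
qed

text \<open>The library's invariance of Lebesgue measure under orthogonal maps needs a well-ordered
  index type.  For an arbitrary finite \<open>'n\<close> we therefore work in \<open>\<real>\<^sup>2\<^sup>n\<close>, indexed by the
  well-ordered type \<open>'n bit0\<close>, and use the coordinates along an injection \<open>'n \<Rightarrow> 'n bit0\<close>:
  their image measure is the standard Gaussian on \<open>\<real>\<^sup>n\<close>.\<close>

definition into_bit0 :: "'n::finite \<Rightarrow> 'n bit0" where
  "into_bit0 = (SOME f. inj f)"

lemma inj_into_bit0: "inj (into_bit0 :: 'n::finite \<Rightarrow> 'n bit0)"
proof -
  obtain f :: "'n \<Rightarrow> 'n bit0" where "inj f"
    using card_le_inj[of "UNIV :: 'n set" "UNIV :: 'n bit0 set"] by auto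
  then show ?thesis unfolding into_bit0_def by (rule someI[where P=inj])
qed

definition proj_bit0 :: "real^('n::finite bit0) \<Rightarrow> real^'n" where
  "proj_bit0 z = (\<chi> i. z $ into_bit0 i)"

lemma proj_bit0_nth[simp]: "proj_bit0 z $ i = z $ into_bit0 i"
  by (simp add: proj_bit0_def)

lemma continuous_on_proj_bit0[continuous_intros]:
  "continuous_on S f \<Longrightarrow> continuous_on S (\<lambda>x. proj_bit0 (f x))"
  unfolding proj_bit0_def by (intro continuous_intros)

lemma borel_measurable_proj_bit0[measurable]: "proj_bit0 \<in> borel_measurable borel"
  by (intro borel_measurable_continuous_onI continuous_intros)

lemma sum_UNIV_bit0: "(\<Sum>k\<in>UNIV. g k) = (\<Sum>i\<in>UNIV. g (into_bit0 i)) + (\<Sum>k\<in>- range into_bit0. g k)"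
  for g :: "'n::finite bit0 \<Rightarrow> 'a::comm_monoid_add"
  using sum.subset_diff[of "range into_bit0" UNIV g]
  by (simp add: sum.reindex[OF inj_into_bit0] Compl_eq_Diff_UNIV add.commute)

lemma prod_UNIV_bit0: "(\<Prod>k\<in>UNIV. g k) = (\<Prod>i\<in>UNIV. g (into_bit0 i)) * (\<Prod>k\<in>- range into_bit0. g k)"
  for g :: "'n::finite bit0 \<Rightarrow> 'a::comm_monoid_mult"
  using prod.subset_diff[of "range into_bit0" UNIV g]
  by (simp add: prod.reindex[OF inj_into_bit0] Compl_eq_Diff_UNIV mult.commute)

lemma nn_integral_gaussian_proj_bit0_orthogonal:
  fixes Om :: "real^'n::finite^'n" and f :: "real^'n \<Rightarrow> ennreal"
  assumes Om: "orthogonal_matrix Om" and [measurable]: "f \<in> borel_measurable borel"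
  shows "(\<integral>\<^sup>+z. f (Om *v proj_bit0 z) \<partial>gaussian) = (\<integral>\<^sup>+z. f (proj_bit0 z) \<partial>gaussian)"
proof -
  have "orthogonal_transformation (\<lambda>x. Om *v x)"
    using Om by (simp add: orthogonal_transformation_matrix matrix_of_matrix_vector_mul)
  then have Om_inner: "(Om *v x) \<bullet> (Om *v y) = x \<bullet> y" for x y
    by (simp add: orthogonal_transformation_def)
  \<comment> \<open>rotate the embedded copy of \<open>\<real>\<^sup>n\<close> by \<open>Om\<close> and fix the remaining coordinates\<close>
  define T :: "real^('n bit0) \<Rightarrow> real^('n bit0)" where
    "T z = (\<chi> k. if k \<in> range into_bit0 then (Om *v proj_bit0 z) $ (inv into_bit0 k) else z $ k)" for z
  have proj_T: "proj_bit0 (T z) = Om *v proj_bit0 z" for z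
    by (simp add: vec_eq_iff T_def inv_f_f[OF inj_into_bit0])
  have T_outside: "k \<notin> range into_bit0 \<Longrightarrow> T z $ k = z $ k" for z k
    by (simp add: T_def)
  have proj_add: "proj_bit0 (x + y) = proj_bit0 x + proj_bit0 y" for x y
    by (simp add: vec_eq_iff)
  have proj_scale: "proj_bit0 (c *\<^sub>R x) = c *\<^sub>R proj_bit0 x" for c x
    by (simp add: vec_eq_iff)
  have "linear T"
    by (rule linearI)
       (simp_all add: T_def vec_eq_iff proj_add proj_scale matrix_vector_right_distrib
         matrix_vector_mult_scaleR)
  moreover have "T v \<bullet> T w = v \<bullet> w" for v w
  proof -
    have split: "x \<bullet> y = proj_bit0 x \<bullet> proj_bit0 y + (\<Sum>k\<in>- range into_bit0. x $ k * y $ k)"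
      for x y :: "real^('n bit0)"
      unfolding inner_vec_def by (subst sum_UNIV_bit0) simp
    show ?thesis
      unfolding split[of "T v"] split[of v] by (simp add: proj_T Om_inner T_outside)
  qed
  ultimately have "orthogonal_transformation T" by (simp add: orthogonal_transformation_def)
  then have "(\<integral>\<^sup>+z. (f \<circ> proj_bit0) (T z) \<partial>gaussian) = (\<integral>\<^sup>+z. (f \<circ> proj_bit0) z \<partial>gaussian)"
    by (rule nn_integral_gaussian_orthogonal_transformation) measurable
  then show ?thesis by (simp add: proj_T)
qed

lemma nn_integral_gaussian_proj_bit0_exp_quadratic:
  fixes a :: "'n::finite \<Rightarrow> real"
  assumes a: "\<And>i. a i \<ge> 0"
  shows "(\<integral>\<^sup>+z. ennreal (exp (- (\<Sum>i\<in>UNIV. a i * (proj_bit0 z $ i)^2))) \<partial>gaussian)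
       = ennreal (\<Prod>i\<in>UNIV. (1 + 2 * a i) powr (-1/2))"
proof -
  define a' where "a' k = (if k \<in> range into_bit0 then a (inv into_bit0 k) else 0)" for k :: "'n bit0"
  have a'_into: "a' (into_bit0 i) = a i" for i by (simp add: a'_def inv_f_f[OF inj_into_bit0])
  have "(\<Sum>k\<in>- range into_bit0. a' k * (z $ k)^2) = 0" for z :: "real^('n bit0)"
    by (rule sum.neutral) (simp add: a'_def)
  then have "(\<Sum>i\<in>UNIV. a i * (proj_bit0 z $ i)^2) = (\<Sum>k\<in>UNIV. a' k * (z $ k)^2)" for z :: "real^('n bit0)"
    unfolding sum_UNIV_bit0[of "\<lambda>k. a' k * (z $ k)^2"] by (simp add: a'_into)
  moreover have "(\<Prod>k\<in>- range into_bit0. (1 + 2 * a' k) powr (-1/2)) = 1"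
    by (rule prod.neutral) (simp add: a'_def)
  then have "(\<Prod>i\<in>UNIV. (1 + 2 * a i) powr (-1/2)) = (\<Prod>k\<in>UNIV. (1 + 2 * a' k) powr (-1/2))"
    unfolding prod_UNIV_bit0[of "\<lambda>k. (1 + 2 * a' k) powr (-1/2)"] by (simp add: a'_into)
  moreover have "a' k \<ge> 0" for k using a by (simp add: a'_def)
  ultimately show ?thesis by (simp add: nn_integral_gaussian_exp_quadratic)
qed

lemma nn_integral_gaussian_exp_norm_proj_bit0:
  assumes "c \<ge> 0"
  shows "(\<integral>\<^sup>+z. ennreal (exp (- (c * (norm (proj_bit0 z :: real^'n::finite))^2))) \<partial>gaussian)
       = ennreal ((1 + 2 * c) powr (- real CARD('n) / 2))"
proof -
  have "(\<Prod>i\<in>(UNIV :: 'n set). (1 + 2 * c) powr (-1/2)) = (1 + 2 * c) powr (- real CARD('n) / 2)"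
    using assms by (simp add: powr_power)
  moreover have "c * (norm (proj_bit0 z :: real^'n))^2 = (\<Sum>i\<in>UNIV. c * (proj_bit0 z $ i)^2)" for z
    by (simp add: norm_vec_power2 sum_distrib_left)
  ultimately show ?thesis
    using nn_integral_gaussian_proj_bit0_exp_quadratic[of "\<lambda>_::'n. c"] assms by simp
qed

section \<open>Haar measure on the orthogonal group\<close>

lemma continuous_on_matrix_matrix_mult[continuous_intros]:
  fixes f :: "'a::topological_space \<Rightarrow> real^'m^'n" and g :: "'a \<Rightarrow> real^'k^'m"
  shows "continuous_on S f \<Longrightarrow> continuous_on S g \<Longrightarrow> continuous_on S (\<lambda>x. f x ** g x)"
  unfolding matrix_matrix_mult_def by (intro continuous_intros)

lemma continuous_on_matrix_vector_mult[continuous_intros]: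
  fixes f :: "'a::topological_space \<Rightarrow> real^'m^'n" and g :: "'a \<Rightarrow> real^'m"
  shows "continuous_on S f \<Longrightarrow> continuous_on S g \<Longrightarrow> continuous_on S (\<lambda>x. f x *v g x)"
  unfolding matrix_vector_mult_def by (intro continuous_intros)

lemma continuous_on_transpose[continuous_intros]:
  fixes f :: "'a::topological_space \<Rightarrow> real^'m^'n"
  shows "continuous_on S f \<Longrightarrow> continuous_on S (\<lambda>x. transpose (f x))"
  unfolding transpose_def by (intro continuous_intros)

lemma borel_measurable_continuous_on_UNIV:
  assumes "continuous_on UNIV f" "sets M = sets borel"
  shows "f \<in> borel_measurable M"
  using borel_measurable_continuous_onI[OF assms(1)] measurable_cong_sets[OF assms(2) refl] by blast

lemma sets_pair_measure_borel:
  assumes "sets M1 = sets (borel :: 'a::second_countable_topology measure)"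
    and "sets M2 = sets (borel :: 'b::second_countable_topology measure)"
  shows "sets (M1 \<Otimes>\<^sub>M M2) = sets (borel :: ('a \<times> 'b) measure)"
  by (metis sets_pair_measure_cong[OF assms] borel_prod)

lemma closed_orthogonal_matrices: "closed {A :: real^'n^'n. orthogonal_matrix A}"
proof -
  have "{A :: real^'n^'n. orthogonal_matrix A} = {A. transpose A ** A = mat 1}"
    by (simp add: orthogonal_matrix)
  also have "closed \<dots>" by (intro closed_Collect_eq continuous_intros)
  finally show ?thesis .
qed

locale haar_space =
  fixes H :: "(real^'n::finite^'n) measure"
  assumes haar: "haar_orthogonal H"
begin

lemma prob_space_H: "prob_space H"
  using haar by (simp add: haar_orthogonal_def)

lemma sets_H: "sets H = sets borel"
  using haar by (simp add: haar_orthogonal_def)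

lemma AE_orthogonal_matrix: "AE U in H. orthogonal_matrix U"
proof -
  have "{A. orthogonal_matrix A} \<in> sets H"
    unfolding sets_H by (rule borel_closed[OF closed_orthogonal_matrices])
  moreover have "measure H {A. orthogonal_matrix A} = 1"
    using haar by (simp add: haar_orthogonal_def measure_def)
  ultimately show ?thesis
    using prob_space.AE_in_set_eq_1[OF prob_space_H, of "{A. orthogonal_matrix A}"] by simp
qed

lemma nn_integral_left_mult:
  fixes f :: "real^'n^'n \<Rightarrow> ennreal"
  assumes P: "orthogonal_matrix P" and [measurable]: "f \<in> borel_measurable borel"
  shows "(\<integral>\<^sup>+U. f (P ** U) \<partial>H) = (\<integral>\<^sup>+U. f U \<partial>H)"
proof -
  have "(\<lambda>A. P ** A) \<in> H \<rightarrow>\<^sub>M borel"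
    by (rule borel_measurable_continuous_on_UNIV[OF _ sets_H]) (intro continuous_intros)
  then have "(\<integral>\<^sup>+U. f U \<partial>(distr H borel (\<lambda>A. P ** A))) = (\<integral>\<^sup>+U. f (P ** U) \<partial>H)"
    by (rule nn_integral_distr) simp
  then show ?thesis using haar P by (simp add: haar_orthogonal_def)
qed

text \<open>Left invariance and Fubini give invariance under transposition, hence right invariance.\<close>

lemma nn_integral_transpose:
  fixes f :: "real^'n^'n \<Rightarrow> ennreal"
  assumes f[measurable]: "f \<in> borel_measurable borel"
  shows "(\<integral>\<^sup>+U. f (transpose U) \<partial>H) = (\<integral>\<^sup>+U. f U \<partial>H)"
proof -
  interpret prob_space H by (rule prob_space_H)
  have pair: "pair_sigma_finite H H"
    using prob_space_H by (simp add: pair_sigma_finite_def prob_space_imp_sigma_finite)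
  have transpose_meas: "transpose \<in> borel_measurable (borel :: (real^'n^'n) measure)"
    by (rule borel_measurable_continuous_on_UNIV) (auto intro: continuous_intros)
  have "(\<lambda>p :: (real^'n^'n) \<times> (real^'n^'n). transpose (fst p) ** snd p) \<in> borel_measurable (H \<Otimes>\<^sub>M H)"
    by (rule borel_measurable_continuous_on_UNIV[OF _ sets_pair_measure_borel[OF sets_H sets_H]])
       (intro continuous_intros)
  then have meas: "(\<lambda>(W, U). f (transpose W ** U)) \<in> borel_measurable (H \<Otimes>\<^sub>M H)"
    by (simp add: case_prod_beta measurable_compose[OF _ f])
  have "(\<integral>\<^sup>+U. f U \<partial>H) = (\<integral>\<^sup>+W. (\<integral>\<^sup>+U. f (transpose W ** U) \<partial>H) \<partial>H)"
    using AE_orthogonal_matrix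
    by (subst nn_integral_cong_AE[where v="\<lambda>_. \<integral>\<^sup>+U. f U \<partial>H"])
       (auto elim!: eventually_mono simp: nn_integral_left_mult orthogonal_matrix_transpose emeasure_space_1)
  also have "\<dots> = (\<integral>\<^sup>+U. (\<integral>\<^sup>+W. f (transpose W ** U) \<partial>H) \<partial>H)"
    by (rule pair_sigma_finite.Fubini'[OF pair meas, symmetric])
  also have "\<dots> = (\<integral>\<^sup>+U. (\<integral>\<^sup>+W. f (transpose W) \<partial>H) \<partial>H)"
  proof (rule nn_integral_cong_AE)
    show "AE U in H. (\<integral>\<^sup>+W. f (transpose W ** U) \<partial>H) = (\<integral>\<^sup>+W. f (transpose W) \<partial>H)"
      using AE_orthogonal_matrix
    proof eventually_elim
      case (elim U)
      have "(\<integral>\<^sup>+W. f (transpose W ** U) \<partial>H) = (\<integral>\<^sup>+W. (\<lambda>A. f (transpose A)) (transpose U ** W) \<partial>H)"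
        by (simp add: matrix_transpose_mul)
      also have "\<dots> = (\<integral>\<^sup>+W. f (transpose W) \<partial>H)"
        using elim by (intro nn_integral_left_mult measurable_compose[OF transpose_meas f])
          (simp add: orthogonal_matrix_transpose)
      finally show ?case .
    qed
  qed
  also have "\<dots> = (\<integral>\<^sup>+W. f (transpose W) \<partial>H)"
    by (simp add: emeasure_space_1)
  finally show ?thesis by simp
qed

lemma nn_integral_right_mult:
  fixes f :: "real^'n^'n \<Rightarrow> ennreal"
  assumes P: "orthogonal_matrix P" and f[measurable]: "f \<in> borel_measurable borel"
  shows "(\<integral>\<^sup>+U. f (U ** P) \<partial>H) = (\<integral>\<^sup>+U. f U \<partial>H)"
proof -
  have transpose_meas: "transpose \<in> borel_measurable (borel :: (real^'n^'n) measure)"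
    by (rule borel_measurable_continuous_on_UNIV) (auto intro: continuous_intros)
  have "(\<lambda>U. f (U ** P)) \<in> borel_measurable borel"
    by (rule measurable_compose[OF borel_measurable_continuous_on_UNIV f])
       (auto intro: continuous_intros)
  then have "(\<integral>\<^sup>+U. f (U ** P) \<partial>H) = (\<integral>\<^sup>+U. (\<lambda>A. f (transpose A)) (transpose P ** U) \<partial>H)"
    by (subst nn_integral_transpose[symmetric]) (simp_all add: matrix_transpose_mul)
  also have "\<dots> = (\<integral>\<^sup>+U. f (transpose U) \<partial>H)"
    using P by (intro nn_integral_left_mult measurable_compose[OF transpose_meas f])
      (simp add: orthogonal_matrix_transpose)
  also have "\<dots> = (\<integral>\<^sup>+U. f U \<partial>H)" by (rule nn_integral_transpose[OF f])
  finally show ?thesis .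
qed

text \<open>By right invariance, the law of \<open>U x\<close> only depends on \<open>\<parallel>x\<parallel>\<close>.\<close>

lemma nn_integral_mult_vec_norm_scaleR:
  fixes f :: "real^'n \<Rightarrow> ennreal" and e :: "real^'n"
  assumes e: "norm e = 1" and f[measurable]: "f \<in> borel_measurable borel"
  shows "(\<integral>\<^sup>+U. f (U *v (norm x *\<^sub>R e)) \<partial>H) = (\<integral>\<^sup>+U. f (U *v x) \<partial>H)"
proof -
  obtain g where g: "orthogonal_transformation g" "g (norm x *\<^sub>R e) = x"
    using orthogonal_transformation_exists[of "norm x *\<^sub>R e" x] e by auto
  define P where "P = matrix g"
  have P: "orthogonal_matrix P" using g(1) by (simp add: P_def orthogonal_transformation_matrix)
  have Px: "P *v (norm x *\<^sub>R e) = x"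
    using g by (simp add: P_def matrix_works orthogonal_transformation_linear)
  have "(\<lambda>U. f (U *v (norm x *\<^sub>R e))) \<in> borel_measurable borel"
    by (rule measurable_compose[OF borel_measurable_continuous_on_UNIV f])
       (auto intro: continuous_intros)
  then have "(\<integral>\<^sup>+U. f (U *v (norm x *\<^sub>R e)) \<partial>H) = (\<integral>\<^sup>+U. f ((U ** P) *v (norm x *\<^sub>R e)) \<partial>H)"
    using nn_integral_right_mult[OF P, of "\<lambda>U. f (U *v (norm x *\<^sub>R e))"] by simp
  also have "\<dots> = (\<integral>\<^sup>+U. f (U *v x) \<partial>H)"
    by (simp add: matrix_vector_mul_assoc[symmetric] Px)
  finally show ?thesis .
qed

end

definition column_form :: "real^'n^'n \<Rightarrow> 'n::finite \<Rightarrow> real^'n^'n \<Rightarrow> real" where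
  "column_form A j U = column j U \<bullet> (A *v column j U)"

lemma (in haar_space) borel_measurable_column_form[measurable]: "column_form A j \<in> borel_measurable H"
  by (rule borel_measurable_continuous_on_UNIV[OF _ sets_H])
     (unfold column_form_def column_def, intro continuous_intros)

text \<open>The Laplace transform of the quadratic form of \<open>sqrt N u\<^sub>j\<close> with \<open>N \<sim> \<chi>\<^sup>2\<^sub>n\<close>, after
  integrating out \<open>N\<close>, is that of a standard Gaussian vector \<open>g\<close>: writing
  \<open>(1 + 2 l c) powr (-n/2)\<close> as a Gaussian integral turns \<open>\<parallel>g\<parallel> u\<^sub>j\<close> into \<open>U g\<close>, which is
  again Gaussian.\<close>

lemma (in haar_space) nn_integral_column_form_powr_eq_gaussian:
  fixes A :: "real^'n^'n"
  assumes A: "\<And>x. x \<bullet> (A *v x) \<ge> 0" and l: "l > 0"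
  shows "(\<integral>\<^sup>+U. ennreal ((1 + 2 * l * column_form A j U) powr (- real CARD('n) / 2)) \<partial>H)
       = (\<integral>\<^sup>+z. ennreal (exp (- (l * (proj_bit0 z \<bullet> (A *v proj_bit0 z))))) \<partial>gaussian)"
proof -
  interpret prob_space H by (rule prob_space_H)
  let ?G = "gaussian :: (real^('n bit0)) measure"
  have pair: "pair_sigma_finite H ?G"
    by (simp add: pair_sigma_finite_def prob_space_imp_sigma_finite prob_space_H prob_space_gaussian)
  define q where "q x = x \<bullet> (A *v x)" for x
  have q_cont: "continuous_on UNIV q" unfolding q_def by (intro continuous_intros)
  have q_scale: "q (c *\<^sub>R x) = c^2 * q x" for c x
    by (simp add: q_def matrix_vector_mult_scaleR power2_eq_square)
  have [measurable]: "q \<in> borel_measurable borel"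
    by (rule borel_measurable_continuous_onI[OF q_cont])
  have exp_q_meas[measurable]: "(\<lambda>x. ennreal (exp (- (l * q x)))) \<in> borel_measurable borel"
    by measurable
  have pair_meas: "(\<lambda>(U, z). ennreal (exp (- (l * q (U *v f z))))) \<in> borel_measurable (H \<Otimes>\<^sub>M ?G)"
    if "continuous_on UNIV f" for f :: "real^('n bit0) \<Rightarrow> real^'n"
  proof -
    have "continuous_on UNIV (\<lambda>p :: (real^'n^'n) \<times> (real^('n bit0)). f (snd p))"
      by (rule continuous_on_compose2[OF that]) (auto intro: continuous_intros)
    then have "continuous_on UNIV (\<lambda>p :: (real^'n^'n) \<times> (real^('n bit0)). fst p *v f (snd p))"
      by (intro continuous_intros)
    then have "(\<lambda>p. fst p *v f (snd p)) \<in> borel_measurable (H \<Otimes>\<^sub>M ?G)"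
      by (rule borel_measurable_continuous_on_UNIV[OF _ sets_pair_measure_borel[OF sets_H sets_gaussian]])
    then show ?thesis by (simp add: case_prod_beta measurable_compose[OF _ exp_q_meas])
  qed
  define e :: "real^'n" where "e = axis j 1"
  have "(\<integral>\<^sup>+U. ennreal ((1 + 2 * l * column_form A j U) powr (- real CARD('n) / 2)) \<partial>H)
      = (\<integral>\<^sup>+U. (\<integral>\<^sup>+z. ennreal (exp (- (l * q (U *v (norm (proj_bit0 z) *\<^sub>R e))))) \<partial>?G) \<partial>H)"
  proof (intro nn_integral_cong)
    fix U :: "real^'n^'n"
    have "ennreal ((1 + 2 * (l * q (U *v e))) powr (- real CARD('n) / 2))
        = (\<integral>\<^sup>+z. ennreal (exp (- (l * q (U *v e) * (norm (proj_bit0 z :: real^'n))^2))) \<partial>?G)"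
      using l A by (intro nn_integral_gaussian_exp_norm_proj_bit0[symmetric]) (simp add: q_def)
    then show "ennreal ((1 + 2 * l * column_form A j U) powr (- real CARD('n) / 2))
        = (\<integral>\<^sup>+z. ennreal (exp (- (l * q (U *v (norm (proj_bit0 z) *\<^sub>R e))))) \<partial>?G)"
      by (simp add: column_form_def matrix_vector_mult_basis e_def q_def[symmetric]
          matrix_vector_mult_scaleR q_scale mult_ac)
  qed
  also have "\<dots> = (\<integral>\<^sup>+z. (\<integral>\<^sup>+U. ennreal (exp (- (l * q (U *v (norm (proj_bit0 z) *\<^sub>R e))))) \<partial>H) \<partial>?G)"
    using pair_sigma_finite.Fubini'[OF pair pair_meas, of "\<lambda>z. norm (proj_bit0 z) *\<^sub>R e"]
    by (simp add: continuous_intros)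
  also have "\<dots> = (\<integral>\<^sup>+z. (\<integral>\<^sup>+U. ennreal (exp (- (l * q (U *v proj_bit0 z)))) \<partial>H) \<partial>?G)"
    using nn_integral_mult_vec_norm_scaleR[OF _ exp_q_meas, of e] by (simp add: e_def)
  also have "\<dots> = (\<integral>\<^sup>+U. (\<integral>\<^sup>+z. ennreal (exp (- (l * q (U *v proj_bit0 z)))) \<partial>?G) \<partial>H)"
    using pair_sigma_finite.Fubini'[OF pair pair_meas, of proj_bit0]
    by (simp add: continuous_intros)
  also have "\<dots> = (\<integral>\<^sup>+U. (\<integral>\<^sup>+z. ennreal (exp (- (l * q (proj_bit0 z)))) \<partial>?G) \<partial>H)"
    using AE_orthogonal_matrix
    by (intro nn_integral_cong_AE) (auto elim!: eventually_mono
        intro: nn_integral_gaussian_proj_bit0_orthogonal)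
  finally show ?thesis by (simp add: emeasure_space_1 q_def)
qed

lemma nn_integral_gaussian_exp_quadratic_form:
  fixes Q :: "real^'n::finite^'n"
  assumes P: "orthogonal_matrix P" and Q: "Q = P ** diag_mat d ** transpose P"
    and d: "\<And>i. d i \<ge> 0" and l: "l \<ge> 0"
  shows "(\<integral>\<^sup>+z. ennreal (exp (- (l * (proj_bit0 z \<bullet> (Q *v proj_bit0 z))))) \<partial>gaussian)
       = ennreal (\<Prod>i\<in>UNIV. (1 + 2 * l * d i) powr (-1/2))"
proof -
  have "(\<integral>\<^sup>+z. ennreal (exp (- (l * (proj_bit0 z \<bullet> (Q *v proj_bit0 z))))) \<partial>gaussian)
      = (\<integral>\<^sup>+z. ennreal (exp (- (\<Sum>i\<in>UNIV. (l * d i) * ((transpose P *v proj_bit0 z) $ i)^2))) \<partial>gaussian)"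
    by (simp add: quadratic_form_orthogonal_diagonalization[OF Q] sum_distrib_left mult.assoc)
  also have "\<dots> = (\<integral>\<^sup>+z. ennreal (exp (- (\<Sum>i\<in>UNIV. (l * d i) * (proj_bit0 z $ i)^2))) \<partial>gaussian)"
    using P by (intro nn_integral_gaussian_proj_bit0_orthogonal[where f = "\<lambda>y. ennreal (exp (- (\<Sum>i\<in>UNIV. (l * d i) * (y $ i)^2)))"])
      (simp_all add: orthogonal_matrix_transpose)
  also have "\<dots> = ennreal (\<Prod>i\<in>UNIV. (1 + 2 * l * d i) powr (-1/2))"
    using d l by (subst nn_integral_gaussian_proj_bit0_exp_quadratic) (simp_all add: mult.assoc)
  finally show ?thesis .
qed

section \<open>Laplace transforms of \<open>\<chi>\<^sup>2\<close> variables\<close>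

lemma nn_integral_powr_exp_eq_Gamma:
  fixes a b :: real
  assumes a: "a > 0" and b: "b > 0"
  shows "(\<integral>\<^sup>+x. ennreal (indicator {0..} x * x powr (a - 1) * exp (- (b * x))) \<partial>lborel)
       = ennreal (Gamma a / b powr a)"
proof -
  define J where "J = (\<integral>\<^sup>+x. ennreal (indicator {0..} x * x powr (a - 1) * exp (- (b * x))) \<partial>lborel)"
  define f where "f t = indicator {0..} t * t powr (a - 1) / exp t" for t :: real
  have [measurable]: "(\<lambda>t. ennreal (f t)) \<in> borel_measurable borel" unfolding f_def by measurable
  have f_scaled: "f (0 + b * x) = b powr (a - 1) * (indicator {0..} x * x powr (a - 1) * exp (- (b * x)))" for x
    using b by (auto simp: f_def indicator_def powr_mult exp_minus field_simps zero_le_mult_iff)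
  have b_powr: "b * b powr (a - 1) = b powr a"
    using b powr_add[of b 1 "a - 1"] by simp
  have "ennreal (Gamma a) = (\<integral>\<^sup>+t. ennreal (f t) \<partial>lborel)"
    unfolding f_def by (rule Gamma_conv_nn_integral_real[OF a])
  also have "\<dots> = ennreal b * (\<integral>\<^sup>+x. ennreal (f (0 + b * x)) \<partial>lborel)"
    using b nn_integral_real_affine[of "\<lambda>t. ennreal (f t)" b 0] by simp
  also have "(\<integral>\<^sup>+x. ennreal (f (0 + b * x)) \<partial>lborel) = ennreal (b powr (a - 1)) * J"
    unfolding f_scaled J_def using b
    by (subst nn_integral_cmult[symmetric]) (auto simp: ennreal_mult)
  finally have "ennreal (Gamma a) = ennreal (b powr a) * J"
    using b by (simp add: b_powr[symmetric] ennreal_mult mult.assoc)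
  then have "ennreal (1 / b powr a) * ennreal (Gamma a) = (ennreal (1 / b powr a) * ennreal (b powr a)) * J"
    by (simp add: mult.assoc)
  also have "ennreal (1 / b powr a) * ennreal (b powr a) = 1"
    using b by (simp add: ennreal_mult[symmetric])
  finally have "ennreal (1 / b powr a) * ennreal (Gamma a) = J" by simp
  moreover have "ennreal (1 / b powr a) * ennreal (Gamma a) = ennreal (1 / b powr a * Gamma a)"
    using b by (intro ennreal_mult'[symmetric]) simp
  ultimately show ?thesis by (simp add: J_def)
qed

lemma chi2_density_nonneg: "k > 0 \<Longrightarrow> chi2_density k x \<ge> 0"
  by (auto simp: chi2_density_def intro!: divide_nonneg_nonneg mult_nonneg_nonneg Gamma_real_nonneg)

lemma nn_integral_chi2_exp:
  fixes k :: nat and c :: real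
  assumes k: "k > 0" and c: "c \<ge> 0"
  shows "(\<integral>\<^sup>+x. ennreal (exp (- (c * \<bar>x\<bar>))) \<partial>chi2 k) = ennreal ((1 + 2 * c) powr (- real k / 2))"
proof -
  define a where "a = real k / 2"
  define b where "b = 1 / 2 + c"
  have a: "a > 0" using k by (simp add: a_def)
  have b: "b > 0" using c by (simp add: b_def)
  define C where "C = 2 powr a * Gamma a"
  have C: "C > 0" using a by (simp add: C_def Gamma_real_pos)
  \<comment> \<open>the integrand is an unnormalized Gamma density with shape \<open>a\<close> and rate \<open>b\<close>\<close>
  have integrand: "chi2_density k x * exp (- (c * \<bar>x\<bar>)) = 1 / C * (indicator {0..} x * x powr (a - 1) * exp (- (b * x)))" for x
  proof (cases "x > 0")
    case True
    have "exp (- x / 2) * exp (- (c * x)) = exp (- (b * x))"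
      by (simp add: exp_add[symmetric] b_def field_simps)
    then show ?thesis using True C
      by (simp add: chi2_density_def a_def C_def field_simps mult.assoc[symmetric])
  next
    case False
    then show ?thesis by (auto simp: chi2_density_def indicator_def)
  qed
  have "(\<integral>\<^sup>+x. ennreal (exp (- (c * \<bar>x\<bar>))) \<partial>chi2 k)
      = (\<integral>\<^sup>+x. ennreal (chi2_density k x) * ennreal (exp (- (c * \<bar>x\<bar>))) \<partial>lborel)"
    unfolding chi2_def by (rule nn_integral_density) (auto simp: chi2_density_def)
  also have "\<dots> = (\<integral>\<^sup>+x. ennreal (1 / C) * ennreal (indicator {0..} x * x powr (a - 1) * exp (- (b * x))) \<partial>lborel)"
    using C by (intro nn_integral_cong) (simp add: ennreal_mult[symmetric] chi2_density_nonneg[OF k] integrand)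
  also have "\<dots> = ennreal (1 / C) * ennreal (Gamma a / b powr a)"
    by (subst nn_integral_cmult) (simp_all add: nn_integral_powr_exp_eq_Gamma[OF a b])
  also have "\<dots> = ennreal ((1 + 2 * c) powr (- real k / 2))"
  proof -
    have "2 powr a * b powr a = (1 + 2 * c) powr a"
      using c by (simp add: powr_mult[symmetric] b_def algebra_simps)
    moreover have "Gamma a \<noteq> 0" using Gamma_real_pos[OF a] by simp
    ultimately have "1 / C * (Gamma a / b powr a) = (1 + 2 * c) powr (- real k / 2)"
      using a by (simp add: C_def a_def powr_minus field_simps)
    moreover have "ennreal (1 / C) * ennreal (Gamma a / b powr a) = ennreal (1 / C * (Gamma a / b powr a))"
      by (rule ennreal_mult'[symmetric]) (use C in simp)
    ultimately show ?thesis by simp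
  qed
  finally show ?thesis .
qed

lemma prob_space_chi2: "k > 0 \<Longrightarrow> prob_space (chi2 k)"
  using nn_integral_chi2_exp[of k 0] by (intro prob_spaceI) simp

lemma sets_chi2: "sets (chi2 k) = sets borel"
  by (simp add: chi2_def)

abbreviation chi2_PiM :: "('n::finite \<Rightarrow> real) measure" where
  "chi2_PiM \<equiv> PiM UNIV (\<lambda>j::'n. chi2 CARD('n))"

lemma prob_space_chi2_PiM: "prob_space (chi2_PiM :: ('n::finite \<Rightarrow> real) measure)"
  by (intro prob_space_PiM prob_space_chi2) simp

lemma measurable_chi2_PiM_component: "(\<lambda>N. N j) \<in> (chi2_PiM :: ('n::finite \<Rightarrow> real) measure) \<rightarrow>\<^sub>M chi2 CARD('n)"
  by (rule measurable_component_singleton) simp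

lemma borel_measurable_chi2_PiM_component[measurable]:
  "(\<lambda>N. N j) \<in> borel_measurable (chi2_PiM :: ('n::finite \<Rightarrow> real) measure)"
  using measurable_chi2_PiM_component measurable_cong_sets[OF refl sets_chi2] by blast

lemma nn_integral_chi2_PiM_exp:
  assumes c: "c \<ge> 0"
  shows "(\<integral>\<^sup>+N. ennreal (exp (- (c * \<bar>N j\<bar>))) \<partial>(chi2_PiM :: ('n::finite \<Rightarrow> real) measure))
       = ennreal ((1 + 2 * c) powr (- real CARD('n) / 2))"
proof -
  let ?N = "chi2_PiM :: ('n \<Rightarrow> real) measure"
  have "(\<integral>\<^sup>+x. ennreal (exp (- (c * \<bar>x\<bar>))) \<partial>chi2 CARD('n))
      = (\<integral>\<^sup>+x. ennreal (exp (- (c * \<bar>x\<bar>))) \<partial>(distr ?N (chi2 CARD('n)) (\<lambda>N. N j)))"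
    by (subst distr_PiM_component) (auto intro: prob_space_chi2)
  also have "\<dots> = (\<integral>\<^sup>+N. ennreal (exp (- (c * \<bar>N j\<bar>))) \<partial>?N)"
  proof (rule nn_integral_distr[OF measurable_chi2_PiM_component])
    have "(\<lambda>x. ennreal (exp (- (c * \<bar>x\<bar>)))) \<in> borel_measurable borel" by measurable
    moreover have "sets (distr ?N (chi2 CARD('n)) (\<lambda>N. N j)) = sets borel"
      by (simp add: sets_chi2)
    ultimately show "(\<lambda>x. ennreal (exp (- (c * \<bar>x\<bar>)))) \<in> borel_measurable (distr ?N (chi2 CARD('n)) (\<lambda>N. N j))"
      using measurable_cong_sets[OF _ refl] by blast
  qed
  finally show ?thesis using nn_integral_chi2_exp[OF _ c, of "CARD('n)"] by simp
qed

lemma nn_integral_pair_measure_mult: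
  assumes "sigma_finite_measure M2"
    and [measurable]: "f \<in> borel_measurable M1" "g \<in> borel_measurable M2"
  shows "(\<integral>\<^sup>+p. f (fst p) * g (snd p) \<partial>(M1 \<Otimes>\<^sub>M M2)) = (\<integral>\<^sup>+x. f x \<partial>M1) * (\<integral>\<^sup>+y. g y \<partial>M2)"
proof -
  have "(\<integral>\<^sup>+p. f (fst p) * g (snd p) \<partial>(M1 \<Otimes>\<^sub>M M2)) = (\<integral>\<^sup>+x. (\<integral>\<^sup>+y. f x * g y \<partial>M2) \<partial>M1)"
    using sigma_finite_measure.nn_integral_fst[OF assms(1), of "\<lambda>p. f (fst p) * g (snd p)" M1] by simp
  also have "\<dots> = (\<integral>\<^sup>+x. f x * (\<integral>\<^sup>+y. g y \<partial>M2) \<partial>M1)"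
    by (simp add: nn_integral_cmult)
  also have "\<dots> = (\<integral>\<^sup>+x. f x \<partial>M1) * (\<integral>\<^sup>+y. g y \<partial>M2)"
    by (rule nn_integral_multc) simp
  finally show ?thesis .
qed

lemma nn_integral_chi2_PiM_pair_exp:
  fixes a b :: real
  assumes "a \<ge> 0" "b \<ge> 0"
  shows "(\<integral>\<^sup>+y. ennreal (exp (- (a * \<bar>fst y j\<bar>))) * ennreal (exp (- (b * \<bar>snd y j\<bar>)))
      \<partial>(chi2_PiM \<Otimes>\<^sub>M chi2_PiM :: (('n::finite \<Rightarrow> real) \<times> ('n \<Rightarrow> real)) measure))
    = ennreal ((1 + 2 * a) powr (- real CARD('n) / 2)) * ennreal ((1 + 2 * b) powr (- real CARD('n) / 2))"
proof -
  have "(\<integral>\<^sup>+y. ennreal (exp (- (a * \<bar>fst y j\<bar>))) * ennreal (exp (- (b * \<bar>snd y j\<bar>)))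
      \<partial>(chi2_PiM \<Otimes>\<^sub>M chi2_PiM :: (('n \<Rightarrow> real) \<times> ('n \<Rightarrow> real)) measure))
    = (\<integral>\<^sup>+N. ennreal (exp (- (a * \<bar>N j\<bar>))) \<partial>chi2_PiM) * (\<integral>\<^sup>+M. ennreal (exp (- (b * \<bar>M j\<bar>))) \<partial>chi2_PiM)"
    by (rule nn_integral_pair_measure_mult) (simp_all add: prob_space_imp_sigma_finite prob_space_chi2_PiM)
  then show ?thesis using assms by (simp add: nn_integral_chi2_PiM_exp)
qed

section \<open>The random variables \<open>\<zeta>\<^sub>j\<close>\<close>

text \<open>The sample point is \<open>\<omega> = ((U, V), (N, M))\<close>.  The absolute values come from
  \<open>sqrt N\<^sup>2 = \<bar>N\<bar>\<close>; they are harmless since the \<open>\<chi>\<^sup>2\<close> variables are nonnegative.\<close>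

definition zeta :: "real^'n^'n \<Rightarrow> real^'n^'n \<Rightarrow> 'n::finite
    \<Rightarrow> ((real^'n^'n) \<times> (real^'n^'n)) \<times> (('n \<Rightarrow> real) \<times> ('n \<Rightarrow> real)) \<Rightarrow> real" where
  "zeta Q R j \<omega> = \<bar>fst (snd \<omega>) j\<bar> * column_form Q j (fst (fst \<omega>))
     + \<bar>snd (snd \<omega>) j\<bar> * column_form R j (snd (fst \<omega>))"

lemma vstack_block_diag_quadratic_form:
  "vstack x y \<bullet> (block_diag Q R *v vstack x y) = x \<bullet> (Q *v x) + y \<bullet> (R *v y)"
proof -
  have "(block_diag Q R *v vstack x y) $ Inl i = (Q *v x) $ i"
    and "(block_diag Q R *v vstack x y) $ Inr i = (R *v y) $ i" for i
    by (simp_all add: matrix_vector_mult_def block_diag_def vstack_def sum_UNIV_sum_type)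
  then show ?thesis
    by (simp add: inner_vec_def sum_UNIV_sum_type) (simp add: vstack_def)
qed

lemma quadratic_form_scaleR_sqrt:
  fixes A :: "real^'n^'n" and x :: "real^'n"
  shows "(sqrt c *\<^sub>R x) \<bullet> (A *v (sqrt c *\<^sub>R x)) = \<bar>c\<bar> * (x \<bullet> (A *v x))"
  by (simp add: matrix_vector_mult_scaleR real_sqrt_mult_self mult.assoc[symmetric])

lemma Min_quadratic_forms_eq_Min_zeta:
  "(let U = fst (fst \<omega>); V = snd (fst \<omega>);
        N = fst (snd \<omega>); M = snd (snd \<omega>);
        a = (\<lambda>j. vstack (sqrt (N j) *\<^sub>R column j U) (sqrt (M j) *\<^sub>R column j V));
        \<zeta> = (\<lambda>j. a j \<bullet> (block_diag Q R *v a j))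
    in Min (\<zeta> ` UNIV)) = Min (range (\<lambda>j. zeta Q R j \<omega>))"
  unfolding Let_def zeta_def column_form_def vstack_block_diag_quadratic_form
    quadratic_form_scaleR_sqrt ..

lemma zeta_nonneg: "psd_matrix Q \<Longrightarrow> psd_matrix R \<Longrightarrow> zeta Q R j \<omega> \<ge> 0"
  unfolding zeta_def column_form_def psd_matrix_def by (intro add_nonneg_nonneg mult_nonneg_nonneg) auto

lemma (in haar_space) borel_measurable_zeta[measurable]:
  "zeta Q R j \<in> borel_measurable ((H \<Otimes>\<^sub>M H) \<Otimes>\<^sub>M (chi2_PiM \<Otimes>\<^sub>M chi2_PiM))"
  unfolding zeta_def by measurable

lemma (in haar_space) nn_integral_exp_neg_zeta:
  fixes Q R :: "real^'n^'n"
  assumes "psd_matrix Q" "psd_matrix R"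
    and P1: "orthogonal_matrix P1" and Q: "Q = P1 ** diag_mat d1 ** transpose P1" and d1: "\<And>i. d1 i \<ge> 0"
    and P2: "orthogonal_matrix P2" and R: "R = P2 ** diag_mat d2 ** transpose P2" and d2: "\<And>i. d2 i \<ge> 0"
    and l: "l > 0"
  shows "(\<integral>\<^sup>+\<omega>. ennreal (exp (- (l * zeta Q R j \<omega>))) \<partial>((H \<Otimes>\<^sub>M H) \<Otimes>\<^sub>M (chi2_PiM \<Otimes>\<^sub>M chi2_PiM)))
    = ennreal (\<Prod>k\<in>UNIV. (1 + 2 * l * case_sum d1 d2 k) powr (-1/2))"
proof -
  interpret NM: pair_prob_space "chi2_PiM :: ('n \<Rightarrow> real) measure" "chi2_PiM :: ('n \<Rightarrow> real) measure"
    by (simp add: pair_prob_space_def pair_sigma_finite_def prob_space_chi2_PiM prob_space_imp_sigma_finite)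
  have form_nonneg: "x \<bullet> (A *v x) \<ge> 0" if "psd_matrix A" for A :: "real^'n^'n" and x
    using that by (simp add: psd_matrix_def)
  define h where "h A U N = ennreal (exp (- ((l * column_form A j U) * \<bar>N j\<bar>)))" for A U and N :: "'n \<Rightarrow> real"
  have integral_N: "(\<integral>\<^sup>+y. h A U (fst y) * h B V (snd y) \<partial>(chi2_PiM \<Otimes>\<^sub>M chi2_PiM))
      = ennreal ((1 + 2 * l * column_form A j U) powr (- real CARD('n) / 2))
        * ennreal ((1 + 2 * l * column_form B j V) powr (- real CARD('n) / 2))"
    if "psd_matrix A" "psd_matrix B" for A B U V
    unfolding h_def using l form_nonneg[OF that(1)] form_nonneg[OF that(2)]
    by (subst nn_integral_chi2_PiM_pair_exp) (simp_all add: column_form_def mult.assoc)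
  have "ennreal (exp (- (l * zeta Q R j \<omega>))) = h Q (fst (fst \<omega>)) (fst (snd \<omega>)) * h R (snd (fst \<omega>)) (snd (snd \<omega>))"
    for \<omega>
    by (simp add: h_def zeta_def exp_add[symmetric] ennreal_mult[symmetric] algebra_simps)
  moreover have "(\<lambda>\<omega>. h Q (fst (fst \<omega>)) (fst (snd \<omega>)) * h R (snd (fst \<omega>)) (snd (snd \<omega>)))
      \<in> borel_measurable ((H \<Otimes>\<^sub>M H) \<Otimes>\<^sub>M (chi2_PiM \<Otimes>\<^sub>M chi2_PiM))"
    unfolding h_def by measurable
  ultimately have "(\<integral>\<^sup>+\<omega>. ennreal (exp (- (l * zeta Q R j \<omega>))) \<partial>((H \<Otimes>\<^sub>M H) \<Otimes>\<^sub>M (chi2_PiM \<Otimes>\<^sub>M chi2_PiM)))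
      = (\<integral>\<^sup>+p. (\<integral>\<^sup>+y. h Q (fst p) (fst y) * h R (snd p) (snd y) \<partial>(chi2_PiM \<Otimes>\<^sub>M chi2_PiM)) \<partial>(H \<Otimes>\<^sub>M H))"
    using NM.nn_integral_fst[of "\<lambda>\<omega>. h Q (fst (fst \<omega>)) (fst (snd \<omega>)) * h R (snd (fst \<omega>)) (snd (snd \<omega>))"]
    by simp
  also have "\<dots> = (\<integral>\<^sup>+U. ennreal ((1 + 2 * l * column_form Q j U) powr (- real CARD('n) / 2)) \<partial>H)
      * (\<integral>\<^sup>+V. ennreal ((1 + 2 * l * column_form R j V) powr (- real CARD('n) / 2)) \<partial>H)"
    using assms(1,2) prob_space_H nn_integral_pair_measure_mult[of H
        "\<lambda>U. ennreal ((1 + 2 * l * column_form Q j U) powr (- real CARD('n) / 2))" H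
        "\<lambda>V. ennreal ((1 + 2 * l * column_form R j V) powr (- real CARD('n) / 2))"]
    by (simp add: integral_N prob_space_imp_sigma_finite)
  also have "\<dots> = ennreal (\<Prod>i\<in>UNIV. (1 + 2 * l * d1 i) powr (-1/2)) * ennreal (\<Prod>i\<in>UNIV. (1 + 2 * l * d2 i) powr (-1/2))"
    by (simp only: nn_integral_column_form_powr_eq_gaussian[OF form_nonneg[OF assms(1)] l]
        nn_integral_column_form_powr_eq_gaussian[OF form_nonneg[OF assms(2)] l]
        nn_integral_gaussian_exp_quadratic_form[OF P1 Q d1 less_imp_le[OF l]]
        nn_integral_gaussian_exp_quadratic_form[OF P2 R d2 less_imp_le[OF l]])
  also have "\<dots> = ennreal (\<Prod>k\<in>UNIV. (1 + 2 * l * case_sum d1 d2 k) powr (-1/2))"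
    by (simp add: prod_UNIV_sum_type ennreal_mult'[symmetric] prod_nonneg)
  finally show ?thesis .
qed

section \<open>From Laplace transforms to the expected minimum\<close>

lemma nn_integral_exp_neg_Min_le_sum:
  fixes f :: "'i::finite \<Rightarrow> 'a \<Rightarrow> real"
  assumes [measurable]: "\<And>j. f j \<in> borel_measurable M"
  shows "(\<integral>\<^sup>+\<omega>. ennreal (exp (- (l * Min (range (\<lambda>j. f j \<omega>))))) \<partial>M)
       \<le> (\<Sum>j\<in>UNIV. \<integral>\<^sup>+\<omega>. ennreal (exp (- (l * f j \<omega>))) \<partial>M)"
proof -
  have "(\<integral>\<^sup>+\<omega>. ennreal (exp (- (l * Min (range (\<lambda>j. f j \<omega>))))) \<partial>M)
      \<le> (\<integral>\<^sup>+\<omega>. (\<Sum>j\<in>UNIV. ennreal (exp (- (l * f j \<omega>)))) \<partial>M)"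
  proof (rule nn_integral_mono)
    fix \<omega>
    have "Min (range (\<lambda>j. f j \<omega>)) \<in> range (\<lambda>j. f j \<omega>)" by (rule Min_in) auto
    then obtain j where "Min (range (\<lambda>j. f j \<omega>)) = f j \<omega>" by (metis rangeE)
    then show "ennreal (exp (- (l * Min (range (\<lambda>j. f j \<omega>))))) \<le> (\<Sum>j\<in>UNIV. ennreal (exp (- (l * f j \<omega>))))"
      using member_le_sum[of j UNIV "\<lambda>j. ennreal (exp (- (l * f j \<omega>)))"] by simp
  qed
  also have "\<dots> = (\<Sum>j\<in>UNIV. \<integral>\<^sup>+\<omega>. ennreal (exp (- (l * f j \<omega>))) \<partial>M)"
    by (rule nn_integral_sum) auto
  finally show ?thesis .
qed

text \<open>Jensen's inequality for the convex function \<open>z \<mapsto> exp (- l z)\<close>, through its tangent line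
  at \<open>m\<close>; no integrability of \<open>Z\<close> is needed.\<close>

lemma (in prob_space) nn_integral_ge_of_exp_neg_le:
  fixes Z :: "'a \<Rightarrow> real"
  assumes [measurable]: "Z \<in> borel_measurable M" and Z: "\<And>\<omega>. Z \<omega> \<ge> 0"
    and l: "l > 0" and m: "m \<ge> 0"
    and laplace: "(\<integral>\<^sup>+\<omega>. ennreal (exp (- (l * Z \<omega>))) \<partial>M) \<le> ennreal (exp (- (l * m)))"
  shows "ennreal m \<le> (\<integral>\<^sup>+\<omega>. ennreal (Z \<omega>) \<partial>M)"
proof -
  define c where "c = exp (l * m) / l"
  have c: "c > 0" using l by (simp add: c_def)
  have tangent: "m + 1 / l \<le> z + c * exp (- (l * z))" for z
  proof -
    have "1 + (l * m - l * z) \<le> exp (l * m - l * z)" by (rule exp_ge_add_one_self)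
    also have "exp (l * m - l * z) = l * (c * exp (- (l * z)))"
      using l by (simp add: c_def exp_diff exp_minus divide_inverse)
    finally show ?thesis using l by (simp add: field_simps)
  qed
  have "ennreal (m + 1 / l) = ennreal m + ennreal (1 / l)"
    using l m by (intro ennreal_plus) simp_all
  then have "ennreal (1 / l) + ennreal m = (\<integral>\<^sup>+\<omega>. ennreal (m + 1 / l) \<partial>M)"
    by (simp add: emeasure_space_1 add.commute)
  also have "\<dots> \<le> (\<integral>\<^sup>+\<omega>. ennreal (Z \<omega>) + ennreal c * ennreal (exp (- (l * Z \<omega>))) \<partial>M)"
  proof (rule nn_integral_mono)
    fix \<omega>
    have "ennreal (m + 1 / l) \<le> ennreal (Z \<omega> + c * exp (- (l * Z \<omega>)))"
      by (rule ennreal_leI[OF tangent])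
    also have "\<dots> = ennreal (Z \<omega>) + ennreal c * ennreal (exp (- (l * Z \<omega>)))"
      using Z[of \<omega>] c by (simp add: ennreal_plus ennreal_mult)
    finally show "ennreal (m + 1 / l) \<le> ennreal (Z \<omega>) + ennreal c * ennreal (exp (- (l * Z \<omega>)))" .
  qed
  also have "\<dots> = (\<integral>\<^sup>+\<omega>. ennreal (Z \<omega>) \<partial>M) + ennreal c * (\<integral>\<^sup>+\<omega>. ennreal (exp (- (l * Z \<omega>))) \<partial>M)"
    by (simp add: nn_integral_add nn_integral_cmult)
  also have "\<dots> \<le> (\<integral>\<^sup>+\<omega>. ennreal (Z \<omega>) \<partial>M) + ennreal (c * exp (- (l * m)))"
    using laplace c by (simp add: ennreal_mult add_left_mono mult_left_mono)
  also have "c * exp (- (l * m)) = 1 / l" using l by (simp add: c_def exp_minus)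
  finally show ?thesis by (simp add: add.commute ennreal_add_left_cancel_le)
qed

text \<open>With \<open>l = r / (2 m)\<close> and \<open>m\<close> the claimed bound one has \<open>(2 l)^r P = e^r n\<^sup>2\<close>, so that
  \<open>n ((2 l)^r P) powr (-1/2) = exp (- l m)\<close>; this \<open>l\<close> is the optimal Laplace parameter.\<close>

lemma laplace_bound_at_optimal_parameter:
  fixes n r :: nat and P A m l :: real
  assumes n: "n \<ge> 1" and r: "r \<ge> 1" and P: "P > 0"
    and m: "m = exp (-1) * real r * real n powr (- 2 / real r) * P powr (1 / real r)"
    and l: "l = real r / (2 * m)" and A: "(2 * l) ^ r * P \<le> A"
  shows "real n * A powr (-1/2) \<le> exp (- (l * m))"
proof -
  define G where "G = P powr (1 / real r)"
  have G: "G > 0" and G_r: "G ^ r = P"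
    using P r by (simp_all add: G_def powr_power)
  have n_r: "(real n powr (2 / real r)) ^ r = (real n)^2"
    using n r by (simp add: powr_power powr_numeral)
  have "m > 0" using G n r by (simp add: m G_def[symmetric])
  then have lm: "l * m = real r / 2" by (simp add: l)
  have "2 * l = exp 1 * real n powr (2 / real r) / G"
    using n r G by (simp add: l m G_def[symmetric] powr_minus_divide exp_minus field_simps)
  then have "(2 * l) ^ r * P = exp (real r) * (real n)^2"
    using G G_r n_r P by (simp add: power_divide power_mult_distrib exp_of_nat_mult[symmetric])
  then have "A powr (-1/2) \<le> (exp (real r) * (real n)^2) powr (-1/2)"
    using A n by (intro powr_mono2') auto
  also have "\<dots> = exp (- (real r / 2)) / real n"
    using n by (simp add: powr_mult exp_powr_real powr_minus_divide powr_half_sqrt exp_minus field_simps)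
  finally show ?thesis using n by (simp add: lm field_simps)
qed

lemma (in haar_space) nn_integral_exp_neg_Min_zeta_le:
  fixes Q R :: "real^'n^'n"
  assumes "psd_matrix Q" "psd_matrix R"
    and "orthogonal_matrix P1" "Q = P1 ** diag_mat d1 ** transpose P1" "\<And>i. d1 i \<ge> 0"
    and "orthogonal_matrix P2" "R = P2 ** diag_mat d2 ** transpose P2" "\<And>i. d2 i \<ge> 0"
    and l: "l > 0"
  shows "(\<integral>\<^sup>+\<omega>. ennreal (exp (- (l * Min (range (\<lambda>j. zeta Q R j \<omega>))))) \<partial>((H \<Otimes>\<^sub>M H) \<Otimes>\<^sub>M (chi2_PiM \<Otimes>\<^sub>M chi2_PiM)))
    \<le> ennreal (real CARD('n) * (\<Prod>k\<in>UNIV. 1 + 2 * l * case_sum d1 d2 k) powr (-1/2))"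
proof -
  define B where "B = (\<Prod>k\<in>UNIV. 1 + 2 * l * case_sum d1 d2 k)"
  have B: "(\<Prod>k\<in>UNIV. (1 + 2 * l * case_sum d1 d2 k) powr (-1/2)) = B powr (-1/2)"
    unfolding B_def by (rule prod_powr_distrib[symmetric])
  have "(\<integral>\<^sup>+\<omega>. ennreal (exp (- (l * Min (range (\<lambda>j. zeta Q R j \<omega>))))) \<partial>((H \<Otimes>\<^sub>M H) \<Otimes>\<^sub>M (chi2_PiM \<Otimes>\<^sub>M chi2_PiM)))
      \<le> (\<Sum>j\<in>(UNIV :: 'n set). ennreal (B powr (-1/2)))"
    using nn_integral_exp_neg_Min_le_sum[of "\<lambda>j. zeta Q R j" "(H \<Otimes>\<^sub>M H) \<Otimes>\<^sub>M (chi2_PiM \<Otimes>\<^sub>M chi2_PiM)" l]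
    unfolding nn_integral_exp_neg_zeta[OF assms] B by simp
  also have "\<dots> = ennreal (real CARD('n) * B powr (-1/2))"
    by (simp add: ennreal_mult ennreal_of_nat_eq_real_of_nat)
  finally show ?thesis by (simp add: B_def)
qed

lemma (in haar_space) nn_integral_Min_zeta_ge:
  fixes Q R :: "real^'n^'n" and S :: "nat set"
  assumes psd: "psd_matrix Q" "psd_matrix R" and S: "S \<noteq> {}" "S \<subseteq> {1..CARD('n + 'n)}"
  shows "ennreal (exp (-1) * real (card S) * real CARD('n) powr (- 2 / real (card S))
      * (\<Prod>l\<in>S. eig_desc (block_diag Q R) l) powr (1 / real (card S)))
    \<le> (\<integral>\<^sup>+\<omega>. ennreal (Min (range (\<lambda>j. zeta Q R j \<omega>))) \<partial>((H \<Otimes>\<^sub>M H) \<Otimes>\<^sub>M (chi2_PiM \<Otimes>\<^sub>M chi2_PiM)))"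
    (is "ennreal ?m \<le> (\<integral>\<^sup>+\<omega>. ennreal (?Z \<omega>) \<partial>?\<Omega>)")
proof (cases "(\<Prod>l\<in>S. eig_desc (block_diag Q R) l) = 0")
  case False
  obtain P1 d1 P2 d2 where decomposition: "orthogonal_matrix P1" "Q = P1 ** diag_mat d1 ** transpose P1"
    "\<And>i. d1 i \<ge> 0" "orthogonal_matrix P2" "R = P2 ** diag_mat d2 ** transpose P2" "\<And>i. d2 i \<ge> 0"
    and E: "eigen_mset (block_diag Q R) = image_mset (case_sum d1 d2) (mset_set UNIV)"
    using block_diag_psd_diagonalization[OF psd] by blast
  have d: "case_sum d1 d2 k \<ge> 0" for k by (cases k) (simp_all add: decomposition)
  interpret \<Omega>: prob_space ?\<Omega> by (intro prob_space_pair prob_space_H prob_space_chi2_PiM)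
  define r where "r = card S"
  define P where "P = (\<Prod>l\<in>S. eig_desc (block_diag Q R) l)"
  define m where "m = exp (-1) * real r * real CARD('n) powr (- 2 / real r) * P powr (1 / real r)"
  define l where "l = real r / (2 * m)"
  have "finite S" using S(2) finite_subset by blast
  then have r: "r \<ge> 1" using S(1) by (simp add: r_def Suc_le_eq card_gt_0_iff)
  have "P \<ge> 0" unfolding P_def using S(2) by (intro prod_nonneg eig_desc_nonneg[OF E d]) auto
  then have P: "P > 0" using False by (simp add: P_def)
  have m: "m > 0" and l: "l > 0" using P r by (simp_all add: m_def l_def)
  have bound: "real CARD('n) * (\<Prod>k\<in>UNIV. 1 + 2 * l * case_sum d1 d2 k) powr (-1/2) \<le> exp (- (l * m))"
  proof (rule laplace_bound_at_optimal_parameter[OF _ r P m_def l_def])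
    have "(\<Prod>l'\<in>S. 2 * l * eig_desc (block_diag Q R) l') \<le> (\<Prod>k\<in>UNIV. 1 + 2 * l * case_sum d1 d2 k)"
      using l by (intro prod_eig_desc_le[OF E d _ S(2)]) simp
    then show "(2 * l) ^ r * P \<le> (\<Prod>k\<in>UNIV. 1 + 2 * l * case_sum d1 d2 k)"
      by (simp add: P_def r_def prod.distrib)
  qed (simp add: Suc_le_eq)
  have "(\<integral>\<^sup>+\<omega>. ennreal (exp (- (l * ?Z \<omega>))) \<partial>?\<Omega>)
      \<le> ennreal (real CARD('n) * (\<Prod>k\<in>UNIV. 1 + 2 * l * case_sum d1 d2 k) powr (-1/2))"
    by (rule nn_integral_exp_neg_Min_zeta_le[OF psd decomposition l])
  also have "\<dots> \<le> ennreal (exp (- (l * m)))" using bound by (rule ennreal_leI)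
  finally have laplace: "(\<integral>\<^sup>+\<omega>. ennreal (exp (- (l * ?Z \<omega>))) \<partial>?\<Omega>) \<le> ennreal (exp (- (l * m)))" .
  have Z_nonneg: "?Z \<omega> \<ge> 0" for \<omega>
    using Min_in[of "range (\<lambda>j. zeta Q R j \<omega>)"] zeta_nonneg[OF psd] by auto
  have "?Z \<in> borel_measurable ?\<Omega>" by (rule borel_measurable_Min) auto
  from \<Omega>.nn_integral_ge_of_exp_neg_le[OF this Z_nonneg l less_imp_le[OF m] laplace]
  show ?thesis by (simp add: m_def r_def P_def)
qed simp

theorem mainTheorem5:
  fixes Q R :: "real^'n^'n"
    and H :: "(real^'n^'n) measure"
    and \<S> :: "nat set"
  assumes "psd_matrix Q" and "psd_matrix R"
    and "haar_orthogonal H"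
    and "\<S> \<noteq> {}"
    and "\<S> \<subseteq> {1 .. card {l \<in> {1 .. 2 * CARD('n)}. eig_desc (block_diag Q R) l > 0}}"
  shows "(\<integral>\<^sup>+ \<omega>. ennreal (
            let U = fst (fst \<omega>); V = snd (fst \<omega>);
                N = fst (snd \<omega>); M = snd (snd \<omega>);
                a = (\<lambda>j. vstack (sqrt (N j) *\<^sub>R column j U) (sqrt (M j) *\<^sub>R column j V));
                \<zeta> = (\<lambda>j. a j \<bullet> (block_diag Q R *v a j))
            in Min (\<zeta> ` UNIV))
          \<partial>((H \<Otimes>\<^sub>M H) \<Otimes>\<^sub>M
              (PiM UNIV (\<lambda>j::'n. chi2 CARD('n)) \<Otimes>\<^sub>M PiM UNIV (\<lambda>j::'n. chi2 CARD('n)))))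
        \<ge> ennreal (exp (-1) * real (card \<S>) * real CARD('n) powr (- 2 / real (card \<S>))
              * (\<Prod>l\<in>\<S>. eig_desc (block_diag Q R) l) powr (1 / real (card \<S>)))"
proof -
  interpret haar_space H by unfold_locales (rule assms(3))
  have "card {l \<in> {1 .. 2 * CARD('n)}. eig_desc (block_diag Q R) l > 0} \<le> card {1 .. 2 * CARD('n)}"
    by (rule card_mono) auto
  then have "\<S> \<subseteq> {1..CARD('n + 'n)}" using assms(5) by auto
  from nn_integral_Min_zeta_ge[OF assms(1,2,4) this] show ?thesis
    unfolding Min_quadratic_forms_eq_Min_zeta by simp
qed

end
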